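(* Let $A\in\mathbb{R}^{n\times ML}$ have i.i.d. $\mathcal{N}(0,1/n)$ entries with columns $A_1,\dots,A_{ML}$ grouped into $L$ sections of $M$ columns, let $P_1,\dots,P_L>0$ with $\sum_\ell P_\ell=P$, and let $\beta\in\mathbb{R}^{ML}$ be a fixed vector with exactly one non-zero entry in each section $\ell$, equal to $\sqrt{nP_\ell}$. Let $y=A\beta+w$ with $w$ i.i.d. $\mathcal{N}(0,\sigma^2)$ independent of $A$, and define $\mathcal{Z}_{1,j}=\sqrt n\,A_j^{\top}y/\|y\|$ for $j\in[ML]$. Then, jointly in $j$, $$\mathcal{Z}_{1,j}\stackrel{d}{=}\frac{\beta_j}{\sqrt{P+\sigma^2}}\cdot\frac{\chi_n}{\sqrt n}+N_{1,j},$$ i.e. for $j$ in section $\ell$ the shift is $\sqrt{nP_\ell/(P+\sigma^2)}\,\frac{\chi_n}{\sqrt n}\mathbf 1\{j\text{ is the non-zero index of }\beta\}$, where $N_1=(N_{1,j})_{j\in[ML]}$ is multivariate normal with mean zero and covariance $I-\frac{\beta\beta^{\top}}{n(P+\sigma^2)}$, and $\chi_n^2=\|y\|^2/(P+\sigma^2)$ is a chi-square random variable with $n$ degrees of freedom independent of $N_1$. *)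

theory Defs
  imports "HOL-Probability.Probability"
begin

definition gauss :: "real \<Rightarrow> real \<Rightarrow> real measure" where
  "gauss mu s = density lborel (normal_density mu s)"

definition std_gauss_vec :: "'i set \<Rightarrow> ('i \<Rightarrow> real) measure" where
  "std_gauss_vec I = PiM I (\<lambda>_. gauss 0 1)"

definition chi_square :: "nat \<Rightarrow> real measure" where
  "chi_square n = distr (std_gauss_vec {0..<n}) borel (\<lambda>g. \<Sum>i<n. (g i)\<^sup>2)"

definition is_mvn :: "'i set \<Rightarrow> ('i \<Rightarrow> 'i \<Rightarrow> real) \<Rightarrow> ('i \<Rightarrow> real) measure \<Rightarrow> bool" where
  "is_mvn I Cov mu \<longleftrightarrow>
     (\<exists>C :: 'i \<Rightarrow> 'i \<Rightarrow> real.
        (\<forall>i\<in>I. \<forall>j\<in>I. Cov i j = (\<Sum>k\<in>I. C i k * C j k)) \<and>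
        mu = distr (std_gauss_vec I) (PiM I (\<lambda>_. borel))
               (\<lambda>g. \<lambda>i\<in>I. \<Sum>k\<in>I. C i k * g k))"

definition design_noise_space :: "nat \<Rightarrow> nat \<Rightarrow> real \<Rightarrow>
    ((nat \<times> nat \<Rightarrow> real) \<times> (nat \<Rightarrow> real)) measure" where
  "design_noise_space n N \<sigma> =
     PiM ({0..<n} \<times> {0..<N}) (\<lambda>_. gauss 0 (1 / sqrt (real n)))
     \<Otimes>\<^sub>M PiM {0..<n} (\<lambda>_. gauss 0 \<sigma>)"

definition obs :: "nat \<Rightarrow> nat \<Rightarrow> (nat \<Rightarrow> real) \<Rightarrow> (nat \<times> nat \<Rightarrow> real) \<Rightarrow> (nat \<Rightarrow> real) \<Rightarrow> nat \<Rightarrow> real" where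
  "obs n N \<beta> A w i = (\<Sum>j<N. A (i, j) * \<beta> j) + w i"

definition vnorm :: "nat \<Rightarrow> (nat \<Rightarrow> real) \<Rightarrow> real" where
  "vnorm n y = sqrt (\<Sum>i<n. (y i)\<^sup>2)"

definition Z1 :: "nat \<Rightarrow> nat \<Rightarrow> (nat \<Rightarrow> real) \<Rightarrow> (nat \<times> nat \<Rightarrow> real) \<Rightarrow> (nat \<Rightarrow> real) \<Rightarrow> nat \<Rightarrow> real" where
  "Z1 n N \<beta> A w j =
     sqrt (real n) * (\<Sum>i<n. A (i, j) * obs n N \<beta> A w i) / vnorm n (obs n N \<beta> A w)"

end

theory Submission
  imports Defs
begin

text \<open>Write the design and the noise as \<open>A = X\<^sub>1\<^sub>.\<^sub>.\<^sub>N / sqrt n\<close> and \<open>w = \<sigma> X\<^sub>0\<close> for an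
  \<open>n \<times> (N + 1)\<close> array \<open>X\<close> of independent standard normals, so that \<open>y = sqrt (P + \<sigma>\<^sup>2) X v\<close>
  for a unit vector \<open>v\<close> in the plane spanned by the first coordinate and the direction of \<open>\<beta>\<close>.
  The rotation of that plane taking the first coordinate vector to \<open>v\<close>, applied to every row,
  preserves the law of \<open>X\<close>: it is a product of three shears, which preserve Lebesgue measure,
  and it preserves the Gaussian density. After the rotation \<open>y\<close> is proportional to column
  \<open>0\<close>, so \<open>\<parallel>y\<parallel>\<^sup>2 / (P + \<sigma>\<^sup>2) = \<parallel>X\<^sub>0\<parallel>\<^sup>2\<close> is \<open>\<chi>\<^sup>2\<^sub>n\<close>, and \<open>Z\<close> is an explicit
  function of \<open>\<parallel>X\<^sub>0\<parallel>\<close> and of the projections of the other columns on \<open>X\<^sub>0 / \<parallel>X\<^sub>0\<parallel>\<close>.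
  Conditionally on \<open>X\<^sub>0\<close> these projections are independent standard normals, which yields
  the Gaussian part with covariance \<open>I - \<beta> \<beta>\<^sup>T / (n (P + \<sigma>\<^sup>2))\<close>, independent of \<open>\<chi>\<^sup>2\<^sub>n\<close>.\<close>

section \<open>Shears preserve Lebesgue measure\<close>

lemma distr_pair_measure_kernel:
  assumes sf1: "sigma_finite_measure M1" and sf2: "sigma_finite_measure M2"
    and sf3: "sigma_finite_measure M3"
    and T[measurable]: "(\<lambda>(a,b). T a b) \<in> measurable (M1 \<Otimes>\<^sub>M M2) M3"
    and AE: "AE a in M1. distr M2 M3 (T a) = M3"
  shows "distr (M1 \<Otimes>\<^sub>M M2) (M1 \<Otimes>\<^sub>M M3) (\<lambda>(a,b). (a, T a b)) = M1 \<Otimes>\<^sub>M M3"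
proof (rule pair_measure_eqI[OF sf1 sf3, symmetric])
  interpret M2: sigma_finite_measure M2 by fact
  have F: "(\<lambda>(a,b). (a, T a b)) \<in> measurable (M1 \<Otimes>\<^sub>M M2) (M1 \<Otimes>\<^sub>M M3)"
    by measurable
  show "sets (M1 \<Otimes>\<^sub>M M3) = sets (distr (M1 \<Otimes>\<^sub>M M2) (M1 \<Otimes>\<^sub>M M3) (\<lambda>(a, b). (a, T a b)))"
    by simp
  fix A B assume A: "A \<in> sets M1" and B: "B \<in> sets M3"
  have Ta: "T a \<in> measurable M2 M3" if "a \<in> space M1" for a
    using measurable_comp[OF measurable_Pair1'[OF that] T] by (simp add: comp_def)
  have "emeasure (distr (M1 \<Otimes>\<^sub>M M2) (M1 \<Otimes>\<^sub>M M3) (\<lambda>(a, b). (a, T a b))) (A \<times> B)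
      = emeasure (M1 \<Otimes>\<^sub>M M2) ((\<lambda>(a, b). (a, T a b)) -` (A \<times> B) \<inter> space (M1 \<Otimes>\<^sub>M M2))"
    using A B F by (simp add: emeasure_distr)
  also have "\<dots> = \<integral>\<^sup>+ a. emeasure M2 (Pair a -` ((\<lambda>(a, b). (a, T a b)) -` (A \<times> B) \<inter> space (M1 \<Otimes>\<^sub>M M2))) \<partial>M1"
    using A B F by (intro M2.emeasure_pair_measure_alt measurable_sets[OF F]) auto
  also have "\<dots> = \<integral>\<^sup>+ a. indicator A a * emeasure M2 (T a -` B \<inter> space M2) \<partial>M1"
  proof (intro nn_integral_cong)
    fix a show "emeasure M2 (Pair a -` ((\<lambda>(a, b). (a, T a b)) -` (A \<times> B) \<inter> space (M1 \<Otimes>\<^sub>M M2)))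
        = indicator A a * emeasure M2 (T a -` B \<inter> space M2)"
      using sets.sets_into_space[OF A]
      by (cases "a \<in> A") (auto simp: space_pair_measure vimage_def intro!: arg_cong[where f="emeasure M2"])
  qed
  also have "\<dots> = \<integral>\<^sup>+ a. indicator A a * emeasure M3 B \<partial>M1"
  proof (intro nn_integral_cong_AE)
    show "AE a in M1. indicator A a * emeasure M2 (T a -` B \<inter> space M2) = indicator A a * emeasure M3 B"
      using AE
    proof eventually_elim
      case (elim a)
      show ?case
      proof (cases "a \<in> space M1")
        case True
        have "emeasure M2 (T a -` B \<inter> space M2) = emeasure (distr M2 M3 (T a)) B"
          using B Ta[OF True] by (simp add: emeasure_distr)
        then show ?thesis using elim by simp
      qed (use sets.sets_into_space[OF A] in \<open>auto split: split_indicator\<close>)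
    qed
  qed
  also have "\<dots> = emeasure M1 A * emeasure M3 B"
    using A by (simp add: nn_integral_multc mult.commute)
  finally show "emeasure M1 A * emeasure M3 B
      = emeasure (distr (M1 \<Otimes>\<^sub>M M2) (M1 \<Otimes>\<^sub>M M3) (\<lambda>(a, b). (a, T a b))) (A \<times> B)"
    by simp
qed

lemma distr_PiM_lborel_translate:
  fixes c :: "'i \<Rightarrow> real"
  assumes fin: "finite I"
  shows "distr (PiM I (\<lambda>_. lborel)) (PiM I (\<lambda>_. lborel)) (\<lambda>x. \<lambda>i\<in>I. x i + c i) = PiM I (\<lambda>_. lborel)"
proof (rule product_sigma_finite.PiM_eqI[OF _ fin])
  interpret PS: product_sigma_finite "\<lambda>_. lborel :: real measure"
    by (simp add: product_sigma_finite_def lborel.sigma_finite_measure_axioms)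
  show "product_sigma_finite (\<lambda>_. lborel :: real measure)" ..
  show "sets (distr (PiM I (\<lambda>_. lborel)) (PiM I (\<lambda>_. lborel)) (\<lambda>x. \<lambda>i\<in>I. x i + c i)) = sets (PiM I (\<lambda>_. lborel))"
    by simp
  fix A assume A: "\<And>i. i \<in> I \<Longrightarrow> A i \<in> sets (lborel::real measure)"
  have translate: "emeasure lborel ((\<lambda>x. x + a) -` B) = emeasure lborel B"
    if "B \<in> sets borel" for B :: "real set" and a
  proof -
    have "(\<lambda>x. x + a) -` B = (+) a -` B \<inter> space lborel" by (auto simp: add.commute)
    also have "emeasure lborel \<dots> = emeasure (distr lborel borel ((+) a)) B"
      using that by (simp add: emeasure_distr)
    finally show ?thesis by (simp add: lborel_distr_plus)
  qed
  have meas: "(\<lambda>x. \<lambda>i\<in>I. x i + c i) \<in> measurable (PiM I (\<lambda>_. lborel)) (PiM I (\<lambda>_. lborel :: real measure))"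
    by measurable
  have pre: "(\<lambda>x. \<lambda>i\<in>I. x i + c i) -` Pi\<^sub>E I A \<inter> space (PiM I (\<lambda>_. lborel)) = Pi\<^sub>E I (\<lambda>i. (\<lambda>x. x + c i) -` A i)"
    by (auto simp: space_PiM PiE_iff extensional_def)
  have "emeasure (distr (PiM I (\<lambda>_. lborel)) (PiM I (\<lambda>_. lborel)) (\<lambda>x. \<lambda>i\<in>I. x i + c i)) (Pi\<^sub>E I A)
     = emeasure (PiM I (\<lambda>_. lborel)) (Pi\<^sub>E I (\<lambda>i. (\<lambda>x. x + c i) -` A i))"
    using A by (subst emeasure_distr[OF meas]) (auto simp: pre intro!: sets_PiM_I_finite fin)
  also have "\<dots> = (\<Prod>i\<in>I. emeasure lborel ((\<lambda>x. x + c i) -` A i))"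
    using A fin by (subst PS.emeasure_PiM) (auto intro!: measurable_sets_borel[of _ borel])
  also have "\<dots> = (\<Prod>i\<in>I. emeasure lborel (A i))"
    using A by (intro prod.cong refl translate) auto
  finally show "emeasure (distr (PiM I (\<lambda>_. lborel)) (PiM I (\<lambda>_. lborel)) (\<lambda>x. \<lambda>i\<in>I. x i + c i)) (Pi\<^sub>E I A)
      = (\<Prod>i\<in>I. emeasure lborel (A i))" .
qed

lemma measurable_PiM_lborel_shear:
  fixes g :: "('i \<Rightarrow> real) \<Rightarrow> 'i \<Rightarrow> real"
  assumes sub: "I1 \<subseteq> J"
    and g: "\<And>i. i \<in> I1 \<Longrightarrow> (\<lambda>y. g y i) \<in> borel_measurable (PiM (J - I1) (\<lambda>_. lborel))"
  shows "(\<lambda>x. \<lambda>j\<in>J. if j \<in> I1 then x j + g (restrict x (J - I1)) j else x j)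
    \<in> measurable (PiM J (\<lambda>_. lborel)) (PiM J (\<lambda>_. lborel))"
proof (rule measurable_restrict)
  fix j assume j: "j \<in> J"
  have comp: "(\<lambda>x. x j) \<in> borel_measurable (PiM J (\<lambda>_. lborel :: real measure))"
    using measurable_component_singleton[OF j, of "\<lambda>_. lborel::real measure"] by simp
  show "(\<lambda>x. if j \<in> I1 then x j + g (restrict x (J - I1)) j else x j) \<in> measurable (PiM J (\<lambda>_. lborel)) lborel"
  proof (cases "j \<in> I1")
    case True
    have "(\<lambda>x. g (restrict x (J - I1)) j) \<in> borel_measurable (PiM J (\<lambda>_. lborel))"
      by (rule measurable_compose[OF measurable_restrict_subset g[OF True, unfolded measurable_lborel1]]) auto
    then show ?thesis using True comp by simp
  qed (use comp in simp)
qed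

text \<open>On each fibre over the coordinates outside \<open>I1\<close> the shear is a translation.\<close>
lemma distr_PiM_lborel_shear:
  fixes g :: "('i \<Rightarrow> real) \<Rightarrow> 'i \<Rightarrow> real"
  assumes fin: "finite J" and sub: "I1 \<subseteq> J"
    and g: "\<And>i. i \<in> I1 \<Longrightarrow> (\<lambda>y. g y i) \<in> borel_measurable (PiM (J - I1) (\<lambda>_. lborel))"
  shows "distr (PiM J (\<lambda>_. lborel)) (PiM J (\<lambda>_. lborel))
           (\<lambda>x. \<lambda>j\<in>J. if j \<in> I1 then x j + g (restrict x (J - I1)) j else x j) = PiM J (\<lambda>_. lborel)"
proof -
  define I2 where "I2 = J - I1"
  let ?L = "\<lambda>I. PiM I (\<lambda>_. lborel :: real measure)"
  let ?S = "\<lambda>x. \<lambda>j\<in>J. if j \<in> I1 then x j + g (restrict x I2) j else x j"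
  interpret PS: product_sigma_finite "\<lambda>_. lborel :: real measure"
    by (simp add: product_sigma_finite_def lborel.sigma_finite_measure_axioms)
  have J: "J = I2 \<union> I1" "I2 \<inter> I1 = {}" using sub by (auto simp: I2_def)
  have fin1: "finite I1" "finite I2" using fin sub by (auto simp: I2_def intro: finite_subset)
  interpret S1: sigma_finite_measure "?L I1" by (rule PS.sigma_finite[OF fin1(1)])
  interpret S2: sigma_finite_measure "?L I2" by (rule PS.sigma_finite[OF fin1(2)])
  have g': "i \<in> I1 \<Longrightarrow> (\<lambda>y. g y i) \<in> borel_measurable (?L I2)" for i using g by (simp add: I2_def)
  define T where "T a b = (\<lambda>i\<in>I1. b i + g a i)" for a b :: "'i \<Rightarrow> real"
  have Tm: "(\<lambda>(a,b). T a b) \<in> measurable (?L I2 \<Otimes>\<^sub>M ?L I1) (?L I1)"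
    unfolding T_def split_beta'
  proof (rule measurable_restrict)
    fix i assume i: "i \<in> I1"
    have "(\<lambda>x. snd x i) \<in> borel_measurable (?L I2 \<Otimes>\<^sub>M ?L I1)"
      using measurable_compose[OF measurable_snd measurable_component_singleton[OF i, of "\<lambda>_. lborel"]]
      by simp
    moreover have "(\<lambda>x. g (fst x) i) \<in> borel_measurable (?L I2 \<Otimes>\<^sub>M ?L I1)"
      using measurable_compose[OF measurable_fst g'[OF i]] .
    ultimately show "(\<lambda>x. snd x i + g (fst x) i) \<in> measurable (?L I2 \<Otimes>\<^sub>M ?L I1) lborel"
      by simp
  qed
  have merge_m: "merge I2 I1 \<in> measurable (?L I2 \<Otimes>\<^sub>M ?L I1) (?L J)"
    using J by (simp add: measurable_merge)
  have Fm: "(\<lambda>(a,b). (a, T a b)) \<in> measurable (?L I2 \<Otimes>\<^sub>M ?L I1) (?L I2 \<Otimes>\<^sub>M ?L I1)"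
    using Tm by measurable
  have Sm: "?S \<in> measurable (?L J) (?L J)"
    unfolding I2_def by (rule measurable_PiM_lborel_shear[OF sub g])
  have kp: "distr (?L I2 \<Otimes>\<^sub>M ?L I1) (?L I2 \<Otimes>\<^sub>M ?L I1) (\<lambda>(a,b). (a, T a b)) = ?L I2 \<Otimes>\<^sub>M ?L I1"
    by (rule distr_pair_measure_kernel[OF S2.sigma_finite_measure_axioms S1.sigma_finite_measure_axioms
          S1.sigma_finite_measure_axioms Tm])
      (simp add: T_def distr_PiM_lborel_translate[OF fin1(1)])
  have DM: "distr (?L I2 \<Otimes>\<^sub>M ?L I1) (?L J) (merge I2 I1) = ?L J"
    using PS.distr_merge[OF J(2) fin1(2) fin1(1)] J(1) by simp
  have eq: "?S (merge I2 I1 ab) = merge I2 I1 ((\<lambda>(a,b). (a, T a b)) ab)"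
    if "ab \<in> space (?L I2 \<Otimes>\<^sub>M ?L I1)" for ab
  proof -
    obtain a b where ab: "ab = (a,b)" by force
    have a: "a \<in> extensional I2" using that by (auto simp: ab space_pair_measure space_PiM PiE_def)
    have ra: "restrict (merge I2 I1 (a, b)) I2 = a"
      using a J(2) by (auto simp: restrict_def merge_def extensional_def fun_eq_iff)
    have "?S (merge I2 I1 (a,b)) = (\<lambda>j\<in>J. if j \<in> I1 then merge I2 I1 (a,b) j + g a j else merge I2 I1 (a,b) j)"
      by (simp only: ra)
    then show ?thesis
      unfolding ab using J by (auto simp: T_def merge_def restrict_def fun_eq_iff)
  qed
  have "distr (?L J) (?L J) ?S = distr (distr (?L I2 \<Otimes>\<^sub>M ?L I1) (?L J) (merge I2 I1)) (?L J) ?S"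
    by (simp add: DM)
  also have "\<dots> = distr (?L I2 \<Otimes>\<^sub>M ?L I1) (?L J) (?S \<circ> merge I2 I1)"
    by (rule distr_distr[OF Sm merge_m])
  also have "\<dots> = distr (?L I2 \<Otimes>\<^sub>M ?L I1) (?L J) (merge I2 I1 \<circ> (\<lambda>(a,b). (a, T a b)))"
    by (rule distr_cong) (simp_all add: eq)
  also have "\<dots> = distr (distr (?L I2 \<Otimes>\<^sub>M ?L I1) (?L I2 \<Otimes>\<^sub>M ?L I1) (\<lambda>(a,b). (a, T a b))) (?L J) (merge I2 I1)"
    by (rule distr_distr[OF merge_m Fm, symmetric])
  also have "\<dots> = ?L J" by (simp add: kp DM)
  finally show ?thesis unfolding I2_def .
qed

lemma PiM_density_lborel:
  fixes f :: "'i \<Rightarrow> real \<Rightarrow> ennreal"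
  assumes fin: "finite I" and f[measurable]: "\<And>i. f i \<in> borel_measurable borel"
    and sf: "\<And>i. sigma_finite_measure (density lborel (f i))"
  shows "PiM I (\<lambda>i. density lborel (f i)) = density (PiM I (\<lambda>_. lborel)) (\<lambda>x. \<Prod>i\<in>I. f i (x i))"
proof (rule product_sigma_finite.PiM_eqI[OF _ fin, symmetric])
  show "product_sigma_finite (\<lambda>i. density lborel (f i))"
    by (simp add: product_sigma_finite_def sf)
  interpret PS: product_sigma_finite "\<lambda>_. lborel :: real measure"
    by (simp add: product_sigma_finite_def lborel.sigma_finite_measure_axioms)
  show "sets (density (PiM I (\<lambda>_. lborel)) (\<lambda>x. \<Prod>i\<in>I. f i (x i))) = sets (PiM I (\<lambda>i. density lborel (f i)))"
    by (simp cong: sets_PiM_cong)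
  fix A assume A: "\<And>i. i \<in> I \<Longrightarrow> A i \<in> sets (density lborel (f i))"
  have A': "A i \<in> sets borel" if "i \<in> I" for i using A[OF that] by simp
  have PA: "Pi\<^sub>E I A \<in> sets (PiM I (\<lambda>_. lborel :: real measure))"
    using A' fin by (auto intro!: sets_PiM_I_finite)
  have "emeasure (density (PiM I (\<lambda>_. lborel)) (\<lambda>x. \<Prod>i\<in>I. f i (x i))) (Pi\<^sub>E I A)
      = \<integral>\<^sup>+ x. (\<Prod>i\<in>I. f i (x i)) * indicator (Pi\<^sub>E I A) x \<partial>PiM I (\<lambda>_. lborel)"
    using PA by (simp add: emeasure_density)
  also have "\<dots> = \<integral>\<^sup>+ x. (\<Prod>i\<in>I. f i (x i) * indicator (A i) (x i)) \<partial>PiM I (\<lambda>_. lborel)"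
  proof (intro nn_integral_cong)
    fix x assume x: "x \<in> space (PiM I (\<lambda>_. lborel :: real measure))"
    show "(\<Prod>i\<in>I. f i (x i)) * indicator (Pi\<^sub>E I A) x = (\<Prod>i\<in>I. f i (x i) * indicator (A i) (x i))"
    proof (cases "x \<in> Pi\<^sub>E I A")
      case True then show ?thesis by (auto simp: prod.distrib PiE_iff intro!: prod.cong)
    next
      case False
      then obtain i where "i \<in> I" "x i \<notin> A i" using x by (auto simp: space_PiM PiE_iff)
      then show ?thesis using False fin by (auto intro!: prod_zero bexI[of _ i])
    qed
  qed
  also have "\<dots> = (\<Prod>i\<in>I. \<integral>\<^sup>+ y. f i y * indicator (A i) y \<partial>lborel)"
    using A' by (intro PS.product_nn_integral_prod fin) auto
  also have "\<dots> = (\<Prod>i\<in>I. emeasure (density lborel (f i)) (A i))"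
    using A' by (intro prod.cong refl) (simp add: emeasure_density)
  finally show "emeasure (density (PiM I (\<lambda>_. lborel)) (\<lambda>x. \<Prod>i\<in>I. f i (x i))) (Pi\<^sub>E I A)
      = (\<Prod>i\<in>I. emeasure (density lborel (f i)) (A i))" .
qed

lemma prob_space_eq_PiM_empty:
  assumes "prob_space P" and "prob_space Q"
    and "sets P = sets (PiM {} M)" and "sets Q = sets (PiM {} M)"
  shows "P = Q"
proof (rule measure_eqI)
  show "sets P = sets Q" using assms by simp
  fix A assume A: "A \<in> sets P"
  have sp: "space P = {\<lambda>_. undefined}" "space Q = {\<lambda>_. undefined}"
    using sets_eq_imp_space_eq[OF assms(3)] sets_eq_imp_space_eq[OF assms(4)] by (simp_all add: PiM_empty)
  have "A \<subseteq> {\<lambda>_. undefined}" using sets.sets_into_space[OF A] sp by simp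
  then have "A = {} \<or> A = {\<lambda>_. undefined}" by auto
  then show "emeasure P A = emeasure Q A"
    using prob_space.emeasure_space_1[OF assms(1)] prob_space.emeasure_space_1[OF assms(2)] sp by auto
qed

lemma indep_vars_PiM_components:
  assumes P: "\<And>i. i \<in> I \<Longrightarrow> prob_space (Mi i)" and I: "I \<noteq> {}"
  shows "prob_space.indep_vars (PiM I Mi) Mi (\<lambda>i x. x i) I"
proof -
  interpret prob_space "PiM I Mi" by (rule prob_space_PiM[OF P])
  show ?thesis
  proof (rule indep_vars_iff_distr_eq_PiM'[THEN iffD2, OF I])
    show "random_variable (Mi i) (\<lambda>x. x i)" if "i \<in> I" for i using that by measurable
    have "distr (PiM I Mi) (PiM I Mi) (\<lambda>x. \<lambda>i\<in>I. x i) = distr (PiM I Mi) (PiM I Mi) (\<lambda>x. x)"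
      by (rule distr_cong) (auto simp: space_PiM PiE_def extensional_restrict)
    also have "\<dots> = PiM I Mi" by simp
    also have "\<dots> = PiM I (\<lambda>i. distr (PiM I Mi) (Mi i) (\<lambda>x. x i))"
      by (rule PiM_cong) (auto simp: distr_PiM_component P)
    finally show "distr (PiM I Mi) (PiM I Mi) (\<lambda>x. \<lambda>i\<in>I. x i) = PiM I (\<lambda>i. distr (PiM I Mi) (Mi i) (\<lambda>x. x i))" .
  qed
qed

section \<open>Plane rotations of a Gaussian array\<close>

lemma prob_space_gauss [simp]: "\<sigma> > 0 \<Longrightarrow> prob_space (gauss \<mu> \<sigma>)"
  unfolding gauss_def by (rule prob_space_normal_density)

lemma sets_gauss [simp, measurable_cong]: "sets (gauss \<mu> \<sigma>) = sets borel"
  by (simp add: gauss_def)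

lemma space_gauss [simp]: "space (gauss \<mu> \<sigma>) = UNIV"
  by (simp add: gauss_def)

lemma measurable_gauss_range [simp]: "measurable M (gauss \<mu> \<sigma>) = measurable M borel"
  by (rule measurable_cong_sets) simp_all

lemma measurable_component_gauss: "i \<in> I \<Longrightarrow> (\<lambda>x. x i) \<in> borel_measurable (PiM I (\<lambda>_. gauss \<mu> \<sigma>))"
  using measurable_component_singleton[of i I "\<lambda>_. gauss \<mu> \<sigma>"] by simp

lemma sets_std_gauss_vec [measurable_cong]: "sets (std_gauss_vec I) = sets (PiM I (\<lambda>_. borel))"
  unfolding std_gauss_vec_def by (rule sets_PiM_cong) simp_all

definition grid :: "nat \<Rightarrow> nat \<Rightarrow> (nat \<times> nat) set" where
  "grid n N = {0..<n} \<times> {0..<Suc N}"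

lemma finite_grid [simp]: "finite (grid n N)"
  by (simp add: grid_def)

lemma sum_grid: "(\<Sum>p\<in>grid n N. f p) = (\<Sum>i<n. f (i, 0) + (\<Sum>k\<in>{1..N}. f (i, k)))"
proof -
  have "(\<Sum>p\<in>grid n N. f p) = (\<Sum>i\<in>{0..<n}. \<Sum>k\<in>{0..<Suc N}. f (i, k))"
    unfolding grid_def by (subst sum.cartesian_product) (simp add: case_prod_unfold)
  also have "{0..<Suc N} = insert 0 {1..N}" by auto
  finally show ?thesis by (simp add: atLeast0LessThan)
qed

abbreviation lborel_grid :: "nat \<Rightarrow> nat \<Rightarrow> (nat \<times> nat \<Rightarrow> real) measure" where
  "lborel_grid n N \<equiv> PiM (grid n N) (\<lambda>_. lborel)"

abbreviation gauss_grid :: "nat \<Rightarrow> nat \<Rightarrow> (nat \<times> nat \<Rightarrow> real) measure" where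
  "gauss_grid n N \<equiv> PiM (grid n N) (\<lambda>_. gauss 0 1)"

definition row_inner :: "(nat \<Rightarrow> real) \<Rightarrow> nat \<Rightarrow> (nat \<times> nat \<Rightarrow> real) \<Rightarrow> nat \<Rightarrow> real" where
  "row_inner w N x i = (\<Sum>l\<in>{1..N}. w l * x (i, l))"

definition shear_col0 :: "nat \<Rightarrow> nat \<Rightarrow> (nat \<Rightarrow> real) \<Rightarrow> real \<Rightarrow> (nat \<times> nat \<Rightarrow> real) \<Rightarrow> nat \<times> nat \<Rightarrow> real" where
  "shear_col0 n N w t x =
     (\<lambda>p\<in>grid n N. if snd p = 0 then x p + t * row_inner w N x (fst p) else x p)"

definition shear_cols :: "nat \<Rightarrow> nat \<Rightarrow> (nat \<Rightarrow> real) \<Rightarrow> real \<Rightarrow> (nat \<times> nat \<Rightarrow> real) \<Rightarrow> nat \<times> nat \<Rightarrow> real" where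
  "shear_cols n N w s x =
     (\<lambda>p\<in>grid n N. if snd p = 0 then x p else x p + s * w (snd p) * x (fst p, 0))"

text \<open>Each row of the array is rotated, in the plane spanned by the unit vector of column 0 and
  the vector \<open>w\<close> supported on the columns \<open>1..N\<close>, by the angle with cosine \<open>c\<close> and sine \<open>s\<close>.\<close>
definition plane_rotation :: "nat \<Rightarrow> nat \<Rightarrow> (nat \<Rightarrow> real) \<Rightarrow> real \<Rightarrow> real \<Rightarrow> (nat \<times> nat \<Rightarrow> real) \<Rightarrow> nat \<times> nat \<Rightarrow> real" where
  "plane_rotation n N w c s x =
     (\<lambda>p\<in>grid n N. if snd p = 0 then c * x p - s * row_inner w N x (fst p)
       else x p + w (snd p) * (s * x (fst p, 0) + (c - 1) * row_inner w N x (fst p)))"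

lemma shear_col0_apply:
  "p \<in> grid n N \<Longrightarrow> shear_col0 n N w t x p = (if snd p = 0 then x p + t * row_inner w N x (fst p) else x p)"
  by (simp add: shear_col0_def)

lemma shear_cols_apply:
  "p \<in> grid n N \<Longrightarrow> shear_cols n N w s x p = (if snd p = 0 then x p else x p + s * w (snd p) * x (fst p, 0))"
  by (simp add: shear_cols_def)

lemma row_inner_shear_col0: "i < n \<Longrightarrow> row_inner w N (shear_col0 n N w t x) i = row_inner w N x i"
  by (auto simp: row_inner_def shear_col0_def grid_def intro!: sum.cong)

lemma row_inner_shear_cols:
  "i < n \<Longrightarrow> row_inner w N (shear_cols n N w s x) i = row_inner w N x i + s * x (i, 0) * (\<Sum>l\<in>{1..N}. (w l)\<^sup>2)"
  by (auto simp: row_inner_def shear_cols_def grid_def sum.distrib sum_distrib_left power2_eq_square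
      algebra_simps intro!: sum.cong)

lemma measurable_component_lborel_grid:
  "p \<in> grid n N \<Longrightarrow> (\<lambda>x. x p) \<in> borel_measurable (lborel_grid n N)"
  using measurable_component_singleton[of p "grid n N" "\<lambda>_. lborel::real measure"] by simp

lemma measurable_shear_col0: "shear_col0 n N w t \<in> measurable (lborel_grid n N) (lborel_grid n N)"
  unfolding shear_col0_def
proof (rule measurable_restrict)
  fix p assume p: "p \<in> grid n N"
  have "(\<lambda>x. row_inner w N x (fst p)) \<in> borel_measurable (lborel_grid n N)"
    unfolding row_inner_def using p
    by (intro borel_measurable_sum borel_measurable_times measurable_component_lborel_grid)
      (auto simp: grid_def)
  then show "(\<lambda>x. if snd p = 0 then x p + t * row_inner w N x (fst p) else x p) \<in> measurable (lborel_grid n N) lborel"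
    using measurable_component_lborel_grid[OF p] by simp
qed

lemma measurable_shear_cols: "shear_cols n N w s \<in> measurable (lborel_grid n N) (lborel_grid n N)"
  unfolding shear_cols_def
proof (rule measurable_restrict)
  fix p assume p: "p \<in> grid n N"
  have "(\<lambda>x. x (fst p, 0)) \<in> borel_measurable (lborel_grid n N)"
    using p by (intro measurable_component_lborel_grid) (auto simp: grid_def)
  then show "(\<lambda>x. if snd p = 0 then x p else x p + s * w (snd p) * x (fst p, 0)) \<in> measurable (lborel_grid n N) lborel"
    using measurable_component_lborel_grid[OF p] by simp
qed

lemma distr_shear_col0_lborel: "distr (lborel_grid n N) (lborel_grid n N) (shear_col0 n N w t) = lborel_grid n N"
proof -
  let ?I1 = "{p\<in>grid n N. snd p = 0}"
  have eq: "shear_col0 n N w t = (\<lambda>x. \<lambda>p\<in>grid n N. if p \<in> ?I1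
      then x p + (\<lambda>y p. t * row_inner w N y (fst p)) (restrict x (grid n N - ?I1)) p else x p)"
    by (auto simp: shear_col0_def row_inner_def grid_def fun_eq_iff intro!: sum.cong)
  show ?thesis unfolding eq
  proof (rule distr_PiM_lborel_shear)
    fix p assume p: "p \<in> ?I1"
    have "(\<lambda>y. y (fst p, l)) \<in> borel_measurable (PiM (grid n N - ?I1) (\<lambda>_. lborel))" if "l \<in> {1..N}" for l
      using measurable_component_singleton[of "(fst p, l)" "grid n N - ?I1" "\<lambda>_. lborel::real measure"] p that
      by (auto simp: grid_def)
    then show "(\<lambda>y. t * row_inner w N y (fst p)) \<in> borel_measurable (PiM (grid n N - ?I1) (\<lambda>_. lborel))"
      unfolding row_inner_def by (intro borel_measurable_sum borel_measurable_times) auto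
  qed auto
qed

lemma distr_shear_cols_lborel: "distr (lborel_grid n N) (lborel_grid n N) (shear_cols n N w s) = lborel_grid n N"
proof -
  let ?I1 = "{p\<in>grid n N. snd p \<noteq> 0}"
  have eq: "shear_cols n N w s = (\<lambda>x. \<lambda>p\<in>grid n N. if p \<in> ?I1
      then x p + (\<lambda>y p. s * w (snd p) * y (fst p, 0)) (restrict x (grid n N - ?I1)) p else x p)"
    by (auto simp: shear_cols_def grid_def fun_eq_iff)
  show ?thesis unfolding eq
  proof (rule distr_PiM_lborel_shear)
    fix p assume p: "p \<in> ?I1"
    have "(\<lambda>y. y (fst p, 0)) \<in> borel_measurable (PiM (grid n N - ?I1) (\<lambda>_. lborel))"
      using measurable_component_singleton[of "(fst p, 0)" "grid n N - ?I1" "\<lambda>_. lborel::real measure"] p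
      by (auto simp: grid_def)
    then show "(\<lambda>y. s * w (snd p) * y (fst p, 0)) \<in> borel_measurable (PiM (grid n N - ?I1) (\<lambda>_. lborel))"
      by (intro borel_measurable_times) auto
  qed auto
qed

lemma shear_col0_cols_col0_apply:
  assumes "(i, k) \<in> grid n N"
  shows "shear_col0 n N w t (shear_cols n N w s (shear_col0 n N w t x)) (i, k) =
    (if k = 0 then x (i, 0) + t * row_inner w N x i
        + t * (row_inner w N x i + s * (x (i, 0) + t * row_inner w N x i) * (\<Sum>l\<in>{1..N}. (w l)\<^sup>2))
     else x (i, k) + s * w k * (x (i, 0) + t * row_inner w N x i))"
proof -
  have i: "i < n" and i0: "(i, 0) \<in> grid n N" using assms by (auto simp: grid_def)
  show ?thesis
    using assms i0
    by (simp add: shear_col0_apply shear_cols_apply row_inner_shear_cols[OF i] row_inner_shear_col0[OF i])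
qed

text \<open>The three-shear factorisation of a rotation, with \<open>- s / (1 + c) = - tan (\<theta>/2)\<close>.\<close>
lemma plane_rotation_eq_shears:
  assumes cs: "c\<^sup>2 + s\<^sup>2 = 1" and c: "c > -1" and unit: "(\<Sum>l\<in>{1..N}. (w l)\<^sup>2) = 1 \<or> s = 0"
  defines "t \<equiv> - s / (1 + c)"
  shows "plane_rotation n N w c s = shear_col0 n N w t \<circ> shear_cols n N w s \<circ> shear_col0 n N w t"
proof (intro ext)
  fix x and p :: "nat \<times> nat"
  have st: "s * t = c - 1"
  proof -
    have "s * t = - (1 - c\<^sup>2) / (1 + c)" using cs by (simp add: t_def power2_eq_square flip: cs)
    also have "\<dots> = c - 1" using c by (simp add: field_simps power2_eq_square)
    finally show ?thesis .
  qed
  have t1c: "t * (1 + c) = - s" using c by (simp add: t_def)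
  have sW': "s * y * (\<Sum>l\<in>{1..N}. (w l)\<^sup>2) = s * y" for y using unit by auto
  obtain i k where p: "p = (i, k)" by force
  show "plane_rotation n N w c s x p = (shear_col0 n N w t \<circ> shear_cols n N w s \<circ> shear_col0 n N w t) x p"
  proof (cases "p \<in> grid n N")
    case False then show ?thesis by (simp add: plane_rotation_def shear_col0_def)
  next
    case True
    let ?q = "row_inner w N x i"
    have t2: "t * (2 + s * t) = - s"
    proof -
      have "t * (2 + s * t) = t * (1 + c)" by (simp add: st)
      also have "\<dots> = - s" by (rule t1c)
      finally show ?thesis .
    qed
    have "c * x (i, 0) - s * ?q = x (i, 0) * (1 + s * t) + ?q * (t * (2 + s * t))"
      unfolding t2 by (simp add: st)
    also have "\<dots> = x (i, 0) + t * ?q + t * (?q + s * (x (i, 0) + t * ?q) * (\<Sum>l\<in>{1..N}. (w l)\<^sup>2))"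
      unfolding sW' by (simp add: algebra_simps)
    finally have col0: "c * x (i, 0) - s * ?q
        = x (i, 0) + t * ?q + t * (?q + s * (x (i, 0) + t * ?q) * (\<Sum>l\<in>{1..N}. (w l)\<^sup>2))" .
    have cols: "x (i, k) + w k * (s * x (i, 0) + (c - 1) * ?q) = x (i, k) + s * w k * (x (i, 0) + t * ?q)"
      by (simp add: algebra_simps flip: st)
    show ?thesis
      using True col0 cols by (simp add: p shear_col0_cols_col0_apply plane_rotation_def)
  qed
qed

lemma measurable_plane_rotation:
  assumes "c\<^sup>2 + s\<^sup>2 = 1" and "c > -1" and "(\<Sum>l\<in>{1..N}. (w l)\<^sup>2) = 1 \<or> s = 0"
  shows "plane_rotation n N w c s \<in> measurable (lborel_grid n N) (lborel_grid n N)"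
  unfolding plane_rotation_eq_shears[OF assms]
  by (rule measurable_comp[OF measurable_shear_col0 measurable_comp[OF measurable_shear_cols measurable_shear_col0]])

lemma distr_plane_rotation_lborel:
  assumes "c\<^sup>2 + s\<^sup>2 = 1" and "c > -1" and "(\<Sum>l\<in>{1..N}. (w l)\<^sup>2) = 1 \<or> s = 0"
  shows "distr (lborel_grid n N) (lborel_grid n N) (plane_rotation n N w c s) = lborel_grid n N"
proof -
  define t where "t = - s / (1 + c)"
  let ?A = "shear_col0 n N w t" and ?B = "shear_cols n N w s"
  have "distr (lborel_grid n N) (lborel_grid n N) (?A \<circ> ?B \<circ> ?A)
      = distr (distr (lborel_grid n N) (lborel_grid n N) ?A) (lborel_grid n N) (?A \<circ> ?B)"
    by (rule distr_distr[symmetric, OF measurable_comp[OF measurable_shear_cols measurable_shear_col0]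
          measurable_shear_col0])
  also have "\<dots> = distr (lborel_grid n N) (lborel_grid n N) (?A \<circ> ?B)"
    by (simp only: distr_shear_col0_lborel)
  also have "\<dots> = distr (distr (lborel_grid n N) (lborel_grid n N) ?B) (lborel_grid n N) ?A"
    by (rule distr_distr[symmetric, OF measurable_shear_col0 measurable_shear_cols])
  also have "\<dots> = lborel_grid n N"
    by (simp only: distr_shear_col0_lborel distr_shear_cols_lborel)
  finally show ?thesis
    unfolding plane_rotation_eq_shears[OF assms] t_def .
qed

lemma sum_sq_plane_rotation:
  assumes cs: "c\<^sup>2 + s\<^sup>2 = 1" and c: "c > -1" and unit: "(\<Sum>l\<in>{1..N}. (w l)\<^sup>2) = 1 \<or> s = 0"
  shows "(\<Sum>p\<in>grid n N. (plane_rotation n N w c s x p)\<^sup>2) = (\<Sum>p\<in>grid n N. (x p)\<^sup>2)"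
proof -
  have row: "(c * x (i, 0) - s * row_inner w N x i)\<^sup>2
      + (\<Sum>k\<in>{1..N}. (x (i, k) + w k * (s * x (i, 0) + (c - 1) * row_inner w N x i))\<^sup>2)
      = (x (i, 0))\<^sup>2 + (\<Sum>k\<in>{1..N}. (x (i, k))\<^sup>2)" for i
  proof -
    define q where "q = row_inner w N x i"
    define D where "D = s * x (i, 0) + (c - 1) * q"
    define W where "W = (\<Sum>l\<in>{1..N}. (w l)\<^sup>2)"
    have "(\<Sum>k\<in>{1..N}. (x (i, k) + w k * D)\<^sup>2)
        = (\<Sum>k\<in>{1..N}. (x (i, k))\<^sup>2 + 2 * D * (w k * x (i, k)) + D\<^sup>2 * (w k)\<^sup>2)"
      by (intro sum.cong) (auto simp: power2_eq_square algebra_simps)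
    also have "\<dots> = (\<Sum>k\<in>{1..N}. (x (i, k))\<^sup>2) + 2 * D * q + D\<^sup>2 * W"
      by (simp add: sum.distrib sum_distrib_left q_def row_inner_def W_def)
    finally have expand: "(\<Sum>k\<in>{1..N}. (x (i, k) + w k * D)\<^sup>2)
        = (\<Sum>k\<in>{1..N}. (x (i, k))\<^sup>2) + 2 * D * q + D\<^sup>2 * W" .
    have "(c * x (i, 0) - s * q)\<^sup>2 + 2 * D * q + D\<^sup>2 * W = (x (i, 0))\<^sup>2"
      using unit
    proof
      assume "(\<Sum>l\<in>{1..N}. (w l)\<^sup>2) = 1"
      moreover have "(c * x (i, 0) - s * q)\<^sup>2 + 2 * D * q + D\<^sup>2
          = (c\<^sup>2 + s\<^sup>2) * (x (i, 0))\<^sup>2 + (c\<^sup>2 + s\<^sup>2 - 1) * q\<^sup>2"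
        unfolding D_def by (simp add: power2_eq_square algebra_simps)
      ultimately show ?thesis using cs by (simp add: W_def)
    next
      assume s0: "s = 0"
      then have "c = 1" using cs c by (auto simp: power2_eq_1_iff)
      then show ?thesis using s0 by (simp add: D_def)
    qed
    then show ?thesis using expand by (simp add: D_def q_def)
  qed
  have "(\<Sum>p\<in>grid n N. (plane_rotation n N w c s x p)\<^sup>2)
      = (\<Sum>i<n. (c * x (i, 0) - s * row_inner w N x i)\<^sup>2
          + (\<Sum>k\<in>{1..N}. (x (i, k) + w k * (s * x (i, 0) + (c - 1) * row_inner w N x i))\<^sup>2))"
    unfolding sum_grid
    by (intro sum.cong refl arg_cong2[where f="(+)"] sum.cong) (auto simp: plane_rotation_def grid_def)
  also have "\<dots> = (\<Sum>p\<in>grid n N. (x p)\<^sup>2)"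
    unfolding sum_grid by (rule sum.cong[OF refl row])
  finally show ?thesis .
qed

lemma gauss_grid_eq_density:
  "gauss_grid n N = density (lborel_grid n N) (\<lambda>x. \<Prod>p\<in>grid n N. ennreal (normal_density 0 1 (x p)))"
  unfolding gauss_def
proof (rule PiM_density_lborel)
  show "sigma_finite_measure (density lborel (\<lambda>x. ennreal (normal_density 0 1 x)))"
    by (rule prob_space_imp_sigma_finite, rule prob_space_normal_density) simp
qed auto

lemma prod_std_normal_density:
  assumes "finite A"
  shows "(\<Prod>p\<in>A. ennreal (normal_density 0 1 (x p)))
    = ennreal ((1 / sqrt (2 * pi)) ^ card A * exp (- (\<Sum>p\<in>A. (x p)\<^sup>2) / 2))"
proof -
  have "(\<Prod>p\<in>A. ennreal (normal_density 0 1 (x p))) = ennreal (\<Prod>p\<in>A. normal_density 0 1 (x p))"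
    by (rule prod_ennreal) simp
  also have "(\<Prod>p\<in>A. normal_density 0 1 (x p)) = (\<Prod>p\<in>A. (1 / sqrt (2 * pi)) * exp (- (x p)\<^sup>2 / 2))"
    by (simp add: normal_density_def)
  also have "\<dots> = (\<Prod>p\<in>A. (1 / sqrt (2 * pi))) * (\<Prod>p\<in>A. exp (- (x p)\<^sup>2 / 2))"
    by (rule prod.distrib)
  also have "(\<Prod>p\<in>A. exp (- (x p)\<^sup>2 / 2)) = exp (\<Sum>p\<in>A. - (x p)\<^sup>2 / 2)"
    using assms by (simp add: exp_sum)
  also have "(\<Sum>p\<in>A. - (x p)\<^sup>2 / 2) = - (\<Sum>p\<in>A. (x p)\<^sup>2) / 2"
    by (simp add: sum_negf sum_divide_distrib)
  also have "(\<Prod>p\<in>A. (1 / sqrt (2 * pi))) = (1 / sqrt (2 * pi)) ^ card A" by simp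
  finally show ?thesis .
qed

lemma measurable_plane_rotation_gauss_grid:
  assumes "c\<^sup>2 + s\<^sup>2 = 1" and "c > -1" and "(\<Sum>l\<in>{1..N}. (w l)\<^sup>2) = 1 \<or> s = 0"
  shows "plane_rotation n N w c s \<in> measurable (gauss_grid n N) (gauss_grid n N)"
proof -
  have "sets (gauss_grid n N) = sets (lborel_grid n N)" by (rule sets_PiM_cong) auto
  then show ?thesis
    using measurable_plane_rotation[OF assms] measurable_cong_sets by blast
qed

text \<open>The standard Gaussian density is a function of the sum of squares, which the rotation
  preserves, and the rotation preserves Lebesgue measure.\<close>
lemma distr_plane_rotation_gauss_grid:
  assumes cs: "c\<^sup>2 + s\<^sup>2 = 1" and c: "c > -1" and unit: "(\<Sum>l\<in>{1..N}. (w l)\<^sup>2) = 1 \<or> s = 0"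
  shows "distr (gauss_grid n N) (gauss_grid n N) (plane_rotation n N w c s) = gauss_grid n N"
proof -
  define f where "f = (\<lambda>x. \<Prod>p\<in>grid n N. ennreal (normal_density 0 1 (x p)))"
  let ?R = "plane_rotation n N w c s"
  have fm: "f \<in> borel_measurable (lborel_grid n N)" unfolding f_def by measurable
  have Rm: "?R \<in> measurable (lborel_grid n N) (lborel_grid n N)"
    by (rule measurable_plane_rotation[OF cs c unit])
  have f_rot: "f (?R x) = f x" for x
    unfolding f_def prod_std_normal_density[OF finite_grid] sum_sq_plane_rotation[OF cs c unit] ..
  have "density (lborel_grid n N) f = density (distr (lborel_grid n N) (lborel_grid n N) ?R) f"
    by (simp add: distr_plane_rotation_lborel[OF cs c unit])
  also have "\<dots> = distr (density (lborel_grid n N) (\<lambda>x. f (?R x))) (lborel_grid n N) ?R"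
    by (rule density_distr[OF fm Rm])
  also have "\<dots> = distr (density (lborel_grid n N) f) (lborel_grid n N) ?R"
    by (simp add: f_rot)
  finally have invariant: "distr (density (lborel_grid n N) f) (lborel_grid n N) ?R = density (lborel_grid n N) f" ..
  have "distr (gauss_grid n N) (gauss_grid n N) ?R = distr (density (lborel_grid n N) f) (lborel_grid n N) ?R"
    unfolding gauss_grid_eq_density f_def by (rule distr_cong) auto
  also have "\<dots> = gauss_grid n N"
    by (simp only: invariant) (simp add: gauss_grid_eq_density f_def)
  finally show ?thesis .
qed

section \<open>Projections of independent Gaussians\<close>

lemma distr_gauss_scale:
  assumes a: "a > 0"
  shows "distr (gauss 0 1) borel (\<lambda>x. a * x) = gauss 0 a"
proof -
  interpret prob_space "gauss 0 1" by simp
  have "distributed (gauss 0 1) lborel (\<lambda>x. x) (normal_density 0 1)"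
    unfolding distributed_def by (auto simp: gauss_def distr_id2)
  from normal_density_affine[OF this, of a 0]
  have "distr (gauss 0 1) lborel (\<lambda>x. a * x) = gauss 0 a"
    using a by (simp add: distributed_def gauss_def)
  moreover have "distr (gauss 0 1) borel (\<lambda>x. a * x) = distr (gauss 0 1) lborel (\<lambda>x. a * x)"
    by (rule distr_cong) auto
  ultimately show ?thesis by simp
qed

lemma distr_PiM_gauss_reindex_scale:
  assumes a: "a > 0" and inj: "inj_on f K" and fK: "f ` K \<subseteq> I" and fin: "finite K"
  shows "distr (PiM I (\<lambda>_. gauss 0 1)) (PiM K (\<lambda>_. gauss 0 a)) (\<lambda>x. \<lambda>k\<in>K. a * x (f k)) = PiM K (\<lambda>_. gauss 0 a)"
proof -
  let ?G = "\<lambda>I. PiM I (\<lambda>_. gauss 0 1 :: real measure)"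
  have R: "distr (?G I) (?G K) (\<lambda>\<omega>. \<lambda>k\<in>K. \<omega> (f k)) = ?G K"
    using distr_PiM_reindex[of I "\<lambda>_. gauss 0 1" f K] inj fK by auto
  have Rm: "(\<lambda>\<omega>. \<lambda>k\<in>K. \<omega> (f k)) \<in> measurable (?G I) (?G K)"
    using fK by (intro measurable_restrict measurable_component_singleton) auto
  have Cm: "compose K (\<lambda>v. a * v) \<in> measurable (?G K) (PiM K (\<lambda>_. gauss 0 a))"
    unfolding compose_def by (intro measurable_restrict) (simp add: measurable_component_singleton)
  have "distr (?G I) (PiM K (\<lambda>_. gauss 0 a)) (\<lambda>x. \<lambda>k\<in>K. a * x (f k))
      = distr (?G I) (PiM K (\<lambda>_. gauss 0 a)) (compose K (\<lambda>v. a * v) \<circ> (\<lambda>\<omega>. \<lambda>k\<in>K. \<omega> (f k)))"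
    by (rule distr_cong) (auto simp: compose_def fun_eq_iff)
  also have "\<dots> = distr (?G K) (PiM K (\<lambda>_. gauss 0 a)) (compose K (\<lambda>v. a * v))"
    by (simp add: distr_distr[OF Cm Rm, symmetric] R)
  also have "\<dots> = PiM K (\<lambda>_. distr (gauss 0 1) (gauss 0 a) (\<lambda>v. a * v))"
    by (rule distr_PiM_finite_prob_space'[OF fin]) (use a in auto)
  also have "distr (gauss 0 1) (gauss 0 a) (\<lambda>v. a * v) = gauss 0 a"
    using distr_gauss_scale[OF a] by (simp cong: distr_cong)
  finally show ?thesis .
qed

lemma indep_vars_PiM_gauss_blocks:
  assumes KI: "\<And>j. j \<in> J \<Longrightarrow> K j \<subseteq> I" and disj: "disjoint_family_on K J" and I: "I \<noteq> {}"
    and Y: "\<And>j. j \<in> J \<Longrightarrow> Y j \<in> borel_measurable (PiM (K j) (\<lambda>_. gauss 0 1))"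
  shows "prob_space.indep_vars (PiM I (\<lambda>_. gauss 0 1)) (\<lambda>_. borel) (\<lambda>j x. Y j (restrict x (K j))) J"
proof -
  interpret prob_space "PiM I (\<lambda>_. gauss 0 1)" by (rule prob_space_PiM) simp
  have "indep_vars (\<lambda>_. gauss 0 1) (\<lambda>i x. x i) I"
    by (rule indep_vars_PiM_components[OF _ I]) simp
  from indep_vars_restrict[OF this KI disj]
  have "indep_vars (\<lambda>j. PiM (K j) (\<lambda>_. gauss 0 1)) (\<lambda>j \<omega>. restrict (\<lambda>i. \<omega> i) (K j)) J" .
  from indep_vars_compose2[OF this Y]
  show ?thesis by simp
qed

lemma distr_unit_combination_gauss:
  assumes fin: "finite F" and inj: "inj_on e F" and eI: "e ` F \<subseteq> I" and u: "(\<Sum>j\<in>F. (u j)\<^sup>2) = 1"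
  shows "distr (PiM I (\<lambda>_. gauss 0 1)) borel (\<lambda>b. \<Sum>j\<in>F. u j * b (e j)) = gauss 0 1"
proof -
  let ?P = "PiM I (\<lambda>_. gauss 0 1)"
  interpret prob_space ?P by (rule prob_space_PiM) simp
  define F' where "F' = {j\<in>F. u j \<noteq> 0}"
  have F'F: "F' \<subseteq> F" by (auto simp: F'_def)
  have finF': "finite F'" using fin F'F by (rule finite_subset[rotated])
  have sumF: "(\<Sum>j\<in>F. f j * u j) = (\<Sum>j\<in>F'. f j * u j)" for f :: "_ \<Rightarrow> real"
    by (rule sum.mono_neutral_right[OF fin F'F]) (auto simp: F'_def)
  have u': "(\<Sum>j\<in>F'. (u j)\<^sup>2) = 1"
    using u sumF[of u] by (simp add: power2_eq_square)
  have F'ne: "F' \<noteq> {}" using u' by auto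
  have Ine: "I \<noteq> {}" using F'ne F'F eI by auto
  have "indep_vars (\<lambda>_. borel) (\<lambda>j x. (\<lambda>f. u j * f (e j)) (restrict x {e j})) F'"
  proof (rule indep_vars_PiM_gauss_blocks[OF _ _ Ine])
    show "{e j} \<subseteq> I" if "j \<in> F'" for j using that F'F eI by auto
    show "disjoint_family_on (\<lambda>j. {e j}) F'"
      using inj_on_subset[OF inj F'F] by (auto simp: disjoint_family_on_def inj_on_def)
    show "(\<lambda>f. u j * f (e j)) \<in> borel_measurable (PiM {e j} (\<lambda>_. gauss 0 1))" for j
      by measurable
  qed
  then have ind: "indep_vars (\<lambda>_. borel) (\<lambda>j x. u j * x (e j)) F'"
    by (rule indep_vars_cong[THEN iffD1, rotated -1]) auto
  have coord: "distributed ?P lborel (\<lambda>x. x (e j)) (normal_density 0 1)" if "j \<in> F'" for j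
  proof -
    have ej: "e j \<in> I" using that F'F eI by auto
    have "distr ?P lborel (\<lambda>x. x (e j)) = distr ?P (gauss 0 1) (\<lambda>x. x (e j))"
      by (rule distr_cong) auto
    also have "\<dots> = gauss 0 1" by (rule distr_PiM_component) (auto simp: ej)
    finally show ?thesis unfolding distributed_def gauss_def using ej by auto
  qed
  have normal: "distributed ?P lborel (\<lambda>x. u j * x (e j)) (normal_density 0 \<bar>u j\<bar>)" if "j \<in> F'" for j
    using normal_density_affine[OF coord[OF that], of "u j" 0] that by (simp add: F'_def)
  have "distributed ?P lborel (\<lambda>x. \<Sum>j\<in>F'. u j * x (e j))
      (normal_density (\<Sum>j\<in>F'. 0) (sqrt (\<Sum>j\<in>F'. \<bar>u j\<bar>\<^sup>2)))"
    by (rule sum_indep_normal[OF finF' F'ne ind]) (auto simp: F'_def normal)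
  then have "distributed ?P lborel (\<lambda>x. \<Sum>j\<in>F'. u j * x (e j)) (normal_density 0 1)"
    using u' by simp
  moreover have "distr ?P borel (\<lambda>b. \<Sum>j\<in>F. u j * b (e j)) = distr ?P lborel (\<lambda>x. \<Sum>j\<in>F'. u j * x (e j))"
    using sumF[of "\<lambda>j. _ (e j)"] by (intro distr_cong) (auto simp: mult.commute)
  ultimately show ?thesis by (simp add: distributed_def gauss_def)
qed

lemma distr_unit_projections_gauss:
  fixes u :: "nat \<Rightarrow> real"
  assumes u: "(\<Sum>i<n. (u i)\<^sup>2) = 1"
  shows "distr (PiM ({0..<n} \<times> {1..N}) (\<lambda>_. gauss 0 1)) (PiM {0..<N} (\<lambda>_. gauss 0 1))
           (\<lambda>b. \<lambda>k\<in>{0..<N}. \<Sum>i<n. u i * b (i, Suc k)) = PiM {0..<N} (\<lambda>_. gauss 0 1)"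
proof -
  let ?P = "PiM ({0..<n} \<times> {1..N}) (\<lambda>_. gauss 0 1)"
  let ?X = "\<lambda>k b. \<Sum>i<n. u i * b (i, Suc k)"
  interpret prob_space ?P by (rule prob_space_PiM) simp
  have Xk: "?X k \<in> borel_measurable ?P" if k: "k \<in> {0..<N}" for k
    using k by (intro borel_measurable_sum borel_measurable_times measurable_component_gauss) auto
  have Xm: "(\<lambda>b. \<lambda>k\<in>{0..<N}. ?X k b) \<in> measurable ?P (PiM {0..<N} (\<lambda>_. gauss 0 1))"
    by (rule measurable_restrict) (simp add: Xk)
  show ?thesis
  proof (cases "N = 0")
    case True
    show ?thesis
      using prob_space_distr[OF Xm]
      by (intro prob_space_eq_PiM_empty[where M="\<lambda>_. gauss 0 1"]) (simp_all add: True prob_space_PiM)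
  next
    case False
    have Ine: "{0..<n} \<times> {1..N} \<noteq> {}" using u False by (cases n) auto
    have "indep_vars (\<lambda>_. borel) (\<lambda>k x. (\<lambda>f. \<Sum>i<n. u i * f (i, Suc k)) (restrict x ({0..<n} \<times> {Suc k}))) {0..<N}"
    proof (rule indep_vars_PiM_gauss_blocks[OF _ _ Ine])
      show "{0..<n} \<times> {Suc k} \<subseteq> {0..<n} \<times> {1..N}" if "k \<in> {0..<N}" for k using that by auto
      show "disjoint_family_on (\<lambda>k. {0..<n} \<times> {Suc k}) {0..<N}"
        by (auto simp: disjoint_family_on_def)
      show "(\<lambda>f. \<Sum>i<n. u i * f (i, Suc k)) \<in> borel_measurable (PiM ({0..<n} \<times> {Suc k}) (\<lambda>_. gauss 0 1))" for k
        by (intro borel_measurable_sum borel_measurable_times measurable_component_gauss) auto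
    qed
    then have ind: "indep_vars (\<lambda>_. borel) ?X {0..<N}"
      by (rule indep_vars_cong[THEN iffD1, rotated -1]) (auto intro!: ext sum.cong)
    have "distr ?P (PiM {0..<N} (\<lambda>_. gauss 0 1)) (\<lambda>b. \<lambda>k\<in>{0..<N}. ?X k b)
        = distr ?P (PiM {0..<N} (\<lambda>_. borel)) (\<lambda>b. \<lambda>k\<in>{0..<N}. ?X k b)"
      by (rule distr_cong) (auto intro!: sets_PiM_cong)
    also have "\<dots> = PiM {0..<N} (\<lambda>k. distr ?P borel (?X k))"
      using False Xk by (intro indep_vars_iff_distr_eq_PiM'[THEN iffD1, OF _ _ ind]) auto
    also have "\<dots> = PiM {0..<N} (\<lambda>_. gauss 0 1)"
      by (intro PiM_cong refl distr_unit_combination_gauss[where e="\<lambda>i. (i, Suc k)" for k, OF _ _ _ u])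
        (auto simp: inj_on_def)
    finally show ?thesis .
  qed
qed

section \<open>The design, the noise and the column-0 decomposition\<close>

definition design_of_grid :: "nat \<Rightarrow> nat \<Rightarrow> real \<Rightarrow> (nat \<times> nat \<Rightarrow> real) \<Rightarrow> (nat \<times> nat \<Rightarrow> real) \<times> (nat \<Rightarrow> real)" where
  "design_of_grid n N \<sigma> x =
     ((\<lambda>p\<in>{0..<n} \<times> {0..<N}. (1 / sqrt (real n)) * x (fst p, Suc (snd p))), (\<lambda>i\<in>{0..<n}. \<sigma> * x (i, 0)))"

lemma measurable_design_of_grid:
  "design_of_grid n N \<sigma> \<in> measurable (gauss_grid n N) (design_noise_space n N \<sigma>)"
  unfolding design_of_grid_def design_noise_space_def
proof (rule measurable_Pair)
  show "(\<lambda>x. \<lambda>p\<in>{0..<n} \<times> {0..<N}. 1 / sqrt (real n) * x (fst p, Suc (snd p)))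
      \<in> measurable (gauss_grid n N) (PiM ({0..<n} \<times> {0..<N}) (\<lambda>_. gauss 0 (1 / sqrt (real n))))"
    by (intro measurable_restrict) (auto simp: grid_def intro!: borel_measurable_times measurable_component_gauss)
  show "(\<lambda>x. \<lambda>i\<in>{0..<n}. \<sigma> * x (i, 0)) \<in> measurable (gauss_grid n N) (PiM {0..<n} (\<lambda>_. gauss 0 \<sigma>))"
    by (intro measurable_restrict) (auto simp: grid_def intro!: borel_measurable_times measurable_component_gauss)
qed

lemma gauss_grid_eq_distr_merge:
  assumes "I1 \<union> I2 = grid n N" "I1 \<inter> I2 = {}"
  shows "gauss_grid n N = distr (PiM I1 (\<lambda>_. gauss 0 1) \<Otimes>\<^sub>M PiM I2 (\<lambda>_. gauss 0 1)) (gauss_grid n N) (merge I1 I2)"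
proof -
  interpret PS: product_sigma_finite "\<lambda>_. gauss 0 1"
    by (simp add: product_sigma_finite_def prob_space_imp_sigma_finite)
  have "finite I1" "finite I2" using assms(1) finite_grid by (metis finite_Un)+
  then show ?thesis using PS.distr_merge[OF assms(2)] assms(1) by simp
qed

lemma distr_design_of_grid:
  assumes n: "n > 0" and \<sigma>: "\<sigma> > 0"
  shows "distr (gauss_grid n N) (design_noise_space n N \<sigma>) (design_of_grid n N \<sigma>) = design_noise_space n N \<sigma>"
proof -
  let ?Ip = "{0..<n} \<times> {1..N}" and ?I0 = "{0..<n} \<times> {0::nat}"
  let ?G = "\<lambda>I. PiM I (\<lambda>_. gauss 0 1 :: real measure)"
  let ?A = "PiM ({0..<n} \<times> {0..<N}) (\<lambda>_. gauss 0 (1 / sqrt (real n)))"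
  let ?W = "PiM {0..<n} (\<lambda>_. gauss 0 \<sigma>)"
  let ?f1 = "\<lambda>b. \<lambda>p\<in>{0..<n} \<times> {0..<N}. (1 / sqrt (real n)) * b (fst p, Suc (snd p))"
  let ?f2 = "\<lambda>a. \<lambda>i\<in>{0..<n}. \<sigma> * a (i, 0::nat)"
  have split: "?Ip \<union> ?I0 = grid n N" "?Ip \<inter> ?I0 = {}" by (auto simp: grid_def)
  have mm: "merge ?Ip ?I0 \<in> measurable (?G ?Ip \<Otimes>\<^sub>M ?G ?I0) (gauss_grid n N)"
    using measurable_merge[of ?Ip ?I0 "\<lambda>_. gauss 0 1"] by (simp add: split(1)[symmetric])
  have f1m: "?f1 \<in> measurable (?G ?Ip) ?A"
    by (intro measurable_restrict) (auto intro!: borel_measurable_times measurable_component_gauss)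
  have f2m: "?f2 \<in> measurable (?G ?I0) ?W"
    by (intro measurable_restrict) (auto intro!: borel_measurable_times measurable_component_gauss)
  have D1: "distr (?G ?Ip) ?A ?f1 = ?A"
    by (rule distr_PiM_gauss_reindex_scale) (use n in \<open>auto simp: inj_on_def\<close>)
  have D2: "distr (?G ?I0) ?W ?f2 = ?W"
    by (rule distr_PiM_gauss_reindex_scale) (use \<sigma> in \<open>auto simp: inj_on_def\<close>)
  have "distr (gauss_grid n N) (design_noise_space n N \<sigma>) (design_of_grid n N \<sigma>)
      = distr (?G ?Ip \<Otimes>\<^sub>M ?G ?I0) (design_noise_space n N \<sigma>) (design_of_grid n N \<sigma> \<circ> merge ?Ip ?I0)"
    by (subst gauss_grid_eq_distr_merge[OF split], rule distr_distr[OF measurable_design_of_grid mm])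
  also have "\<dots> = distr (?G ?Ip \<Otimes>\<^sub>M ?G ?I0) (?A \<Otimes>\<^sub>M ?W) (\<lambda>(b, a). (?f1 b, ?f2 a))"
    by (rule distr_cong)
      (auto simp: design_of_grid_def design_noise_space_def merge_def space_pair_measure fun_eq_iff)
  also have "\<dots> = distr (?G ?Ip) ?A ?f1 \<Otimes>\<^sub>M distr (?G ?I0) ?W ?f2"
    by (rule pair_measure_distr[symmetric, OF f1m f2m]) (simp add: D2 prob_space_imp_sigma_finite prob_space_PiM \<sigma>)
  also have "\<dots> = design_noise_space n N \<sigma>"
    unfolding D1 D2 design_noise_space_def ..
  finally show ?thesis .
qed

definition col0_sq_norm :: "nat \<Rightarrow> (nat \<times> nat \<Rightarrow> real) \<Rightarrow> real" where
  "col0_sq_norm n x = (\<Sum>i<n. (x (i, 0))\<^sup>2)"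

definition col_proj :: "nat \<Rightarrow> nat \<Rightarrow> (nat \<times> nat \<Rightarrow> real) \<Rightarrow> nat \<Rightarrow> real" where
  "col_proj n N x = (\<lambda>k\<in>{0..<N}. \<Sum>i<n. (x (i, 0) / sqrt (col0_sq_norm n x)) * x (i, Suc k))"

lemma measurable_col0_sq_norm:
  "{0..<n} \<times> {0} \<subseteq> I \<Longrightarrow> col0_sq_norm n \<in> borel_measurable (PiM I (\<lambda>_. gauss 0 1))"
  unfolding col0_sq_norm_def by (intro borel_measurable_sum borel_measurable_power measurable_component_gauss) auto

lemma measurable_col_proj: "col_proj n N \<in> measurable (gauss_grid n N) (PiM {0..<N} (\<lambda>_. gauss 0 1))"
proof -
  have "col0_sq_norm n \<in> borel_measurable (gauss_grid n N)"
    by (rule measurable_col0_sq_norm) (auto simp: grid_def)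
  then show ?thesis
    unfolding col_proj_def
    by (intro measurable_restrict, simp,
        intro borel_measurable_sum borel_measurable_times borel_measurable_divide borel_measurable_sqrt
          measurable_component_gauss)
      (auto simp: grid_def)
qed

lemma chi_square_eq_distr_col0:
  "chi_square n = distr (PiM ({0..<n} \<times> {0}) (\<lambda>_. gauss 0 1)) borel (col0_sq_norm n)"
proof -
  let ?I0 = "{0..<n} \<times> {0::nat}"
  let ?G = "\<lambda>I. PiM I (\<lambda>_. gauss 0 1 :: real measure)"
  define E where "E b = (\<lambda>p\<in>?I0. b (fst p))" for b :: "nat \<Rightarrow> real"
  have "fst \<in> ?I0 \<rightarrow> {0..<n}" "inj_on fst ?I0" by (auto simp: inj_on_def)
  then have R: "distr (?G {0..<n}) (?G ?I0) E = ?G ?I0"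
    unfolding E_def using distr_PiM_reindex[of "{0..<n}" "\<lambda>_. gauss 0 1" fst ?I0] by simp
  have Em: "E \<in> measurable (?G {0..<n}) (?G ?I0)"
    unfolding E_def by (intro measurable_restrict) (auto intro: measurable_component_gauss)
  have "distr (?G ?I0) borel (col0_sq_norm n) = distr (distr (?G {0..<n}) (?G ?I0) E) borel (col0_sq_norm n)"
    by (simp only: R)
  also have "\<dots> = distr (?G {0..<n}) borel (col0_sq_norm n \<circ> E)"
    by (rule distr_distr[OF measurable_col0_sq_norm Em]) simp
  also have "\<dots> = chi_square n"
    unfolding chi_square_def std_gauss_vec_def
    by (rule distr_cong) (auto simp: E_def col0_sq_norm_def atLeast0LessThan)
  finally show ?thesis ..
qed

lemma distr_col_proj_fibre:
  assumes "col0_sq_norm n a \<noteq> 0"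
  shows "distr (PiM ({0..<n} \<times> {1..N}) (\<lambda>_. gauss 0 1)) (PiM {0..<N} (\<lambda>_. gauss 0 1))
      (\<lambda>b. \<lambda>k\<in>{0..<N}. \<Sum>i<n. (a (i, 0) / sqrt (col0_sq_norm n a)) * b (i, Suc k)) = PiM {0..<N} (\<lambda>_. gauss 0 1)"
proof (rule distr_unit_projections_gauss)
  have "col0_sq_norm n a > 0"
    using assms by (simp add: col0_sq_norm_def order_le_neq_trans sum_nonneg)
  then show "(\<Sum>i<n. (a (i, 0) / sqrt (col0_sq_norm n a))\<^sup>2) = 1"
    by (simp add: power_divide sum_divide_distrib[symmetric] col0_sq_norm_def)
qed

text \<open>Column \<open>0\<close> is independent of the other columns, so given column \<open>0\<close> the projection
  direction is fixed and the projections are independent standard normals.\<close>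
lemma distr_gauss_grid_col0_col_proj:
  assumes n: "n > 0"
  defines "I0 \<equiv> {0..<n} \<times> {0::nat}"
  shows "distr (gauss_grid n N) (PiM I0 (\<lambda>_. gauss 0 1) \<Otimes>\<^sub>M PiM {0..<N} (\<lambda>_. gauss 0 1))
      (\<lambda>x. (restrict x I0, col_proj n N x)) = PiM I0 (\<lambda>_. gauss 0 1) \<Otimes>\<^sub>M PiM {0..<N} (\<lambda>_. gauss 0 1)"
proof -
  let ?Ip = "{0..<n} \<times> {1..N}"
  let ?G = "\<lambda>I. PiM I (\<lambda>_. gauss 0 1 :: real measure)"
  define T where "T a b = (\<lambda>k\<in>{0..<N}. \<Sum>i<n. (a (i, 0) / sqrt (col0_sq_norm n a)) * b (i, Suc k))"
    for a b :: "nat \<times> nat \<Rightarrow> real"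
  have split: "I0 \<union> ?Ip = grid n N" "I0 \<inter> ?Ip = {}" by (auto simp: I0_def grid_def)
  have mm: "merge I0 ?Ip \<in> measurable (?G I0 \<Otimes>\<^sub>M ?G ?Ip) (gauss_grid n N)"
    using measurable_merge[of I0 ?Ip "\<lambda>_. gauss 0 1"] by (simp add: split(1)[symmetric])
  have norm_m: "(\<lambda>x. col0_sq_norm n (fst x)) \<in> borel_measurable (?G I0 \<Otimes>\<^sub>M ?G ?Ip)"
    by (intro measurable_compose[OF measurable_fst measurable_col0_sq_norm]) (simp add: I0_def)
  then have sqrt_norm_m: "(\<lambda>x. sqrt (col0_sq_norm n (fst x))) \<in> borel_measurable (?G I0 \<Otimes>\<^sub>M ?G ?Ip)"
    by measurable
  have Tm: "(\<lambda>(a, b). T a b) \<in> measurable (?G I0 \<Otimes>\<^sub>M ?G ?Ip) (?G {0..<N})"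
    unfolding T_def split_beta'
    by (intro measurable_restrict, simp only: measurable_gauss_range,
        intro borel_measurable_sum borel_measurable_times borel_measurable_divide sqrt_norm_m
          measurable_compose[OF measurable_fst measurable_component_gauss]
          measurable_compose[OF measurable_snd measurable_component_gauss])
      (auto simp: I0_def)
  have Fm: "(\<lambda>(a, b). (a, T a b)) \<in> measurable (?G I0 \<Otimes>\<^sub>M ?G ?Ip) (?G I0 \<Otimes>\<^sub>M ?G {0..<N})"
    using Tm by measurable
  have Gm: "(\<lambda>x. (restrict x I0, col_proj n N x)) \<in> measurable (gauss_grid n N) (?G I0 \<Otimes>\<^sub>M ?G {0..<N})"
    using split measurable_col_proj by (intro measurable_Pair measurable_restrict_subset) auto
  have sf: "sigma_finite_measure (?G I)" for I
    by (rule prob_space_imp_sigma_finite, rule prob_space_PiM) simp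
  have kernel: "distr (?G I0 \<Otimes>\<^sub>M ?G ?Ip) (?G I0 \<Otimes>\<^sub>M ?G {0..<N}) (\<lambda>(a, b). (a, T a b)) = ?G I0 \<Otimes>\<^sub>M ?G {0..<N}"
  proof (rule distr_pair_measure_kernel[OF sf sf sf Tm])
    have "AE x in lborel. (x::real) \<noteq> 0" by (rule AE_lborel_singleton)
    then have "AE x in gauss 0 1. x \<noteq> 0"
      unfolding gauss_def by (subst AE_density) auto
    then have "AE a in ?G I0. a (0, 0) \<noteq> 0"
      by (intro AE_PiM_component[where P="\<lambda>x. x \<noteq> 0"]) (use n in \<open>auto simp: I0_def\<close>)
    then show "AE a in ?G I0. distr (?G ?Ip) (?G {0..<N}) (T a) = ?G {0..<N}"
    proof eventually_elim
      case (elim a)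
      have "0 < (a (0, 0))\<^sup>2" using elim by simp
      also have "\<dots> \<le> col0_sq_norm n a"
        unfolding col0_sq_norm_def using n by (intro member_le_sum) auto
      finally show ?case unfolding T_def by (intro distr_col_proj_fibre) simp
    qed
  qed
  have merge_eq: "(\<lambda>x. (restrict x I0, col_proj n N x)) (merge I0 ?Ip ab) = (\<lambda>(a, b). (a, T a b)) ab"
    if "ab \<in> space (?G I0 \<Otimes>\<^sub>M ?G ?Ip)" for ab
  proof -
    obtain a b where ab: "ab = (a, b)" by force
    have "a \<in> extensional I0" using that by (auto simp: ab space_pair_measure space_PiM PiE_def)
    then have "restrict (merge I0 ?Ip (a, b)) I0 = a"
      by (auto simp: merge_def extensional_def fun_eq_iff)
    moreover have "col0_sq_norm n (merge I0 ?Ip (a, b)) = col0_sq_norm n a"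
      unfolding col0_sq_norm_def by (intro sum.cong) (auto simp: merge_def I0_def)
    ultimately show ?thesis
      unfolding ab col_proj_def T_def
      by (auto intro!: restrict_ext sum.cong simp: merge_def I0_def)
  qed
  have "distr (gauss_grid n N) (?G I0 \<Otimes>\<^sub>M ?G {0..<N}) (\<lambda>x. (restrict x I0, col_proj n N x))
      = distr (?G I0 \<Otimes>\<^sub>M ?G ?Ip) (?G I0 \<Otimes>\<^sub>M ?G {0..<N}) ((\<lambda>x. (restrict x I0, col_proj n N x)) \<circ> merge I0 ?Ip)"
    by (subst gauss_grid_eq_distr_merge[OF split], rule distr_distr[OF Gm mm])
  also have "\<dots> = distr (?G I0 \<Otimes>\<^sub>M ?G ?Ip) (?G I0 \<Otimes>\<^sub>M ?G {0..<N}) (\<lambda>(a, b). (a, T a b))"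
    by (rule distr_cong[OF refl refl]) (unfold comp_def, rule merge_eq)
  finally show ?thesis unfolding kernel .
qed

lemma prob_space_chi_square: "prob_space (chi_square n)"
  unfolding chi_square_def std_gauss_vec_def
  by (intro prob_space.prob_space_distr prob_space_PiM)
    (auto intro!: borel_measurable_sum borel_measurable_power measurable_component_gauss)

lemma distr_gauss_grid_col_proj_col0_sq_norm:
  assumes n: "n > 0"
  shows "distr (gauss_grid n N) (PiM {0..<N} (\<lambda>_. borel) \<Otimes>\<^sub>M borel) (\<lambda>x. (col_proj n N x, col0_sq_norm n x))
      = std_gauss_vec {0..<N} \<Otimes>\<^sub>M chi_square n"
proof -
  let ?I0 = "{0..<n} \<times> {0::nat}"
  let ?G = "\<lambda>I. PiM I (\<lambda>_. gauss 0 1 :: real measure)"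
  interpret pair_sigma_finite "?G {0..<N}" "?G ?I0"
    by (intro pair_sigma_finite.intro prob_space_imp_sigma_finite prob_space_PiM) simp_all
  have sq_m: "col0_sq_norm n \<in> borel_measurable (?G ?I0)"
    by (rule measurable_col0_sq_norm) simp
  have Hm: "(\<lambda>(g, a). (g, col0_sq_norm n a)) \<in> measurable (?G {0..<N} \<Otimes>\<^sub>M ?G ?I0) (PiM {0..<N} (\<lambda>_. borel) \<Otimes>\<^sub>M borel)"
    using sq_m by measurable
  have Gm: "(\<lambda>x. (restrict x ?I0, col_proj n N x)) \<in> measurable (gauss_grid n N) (?G ?I0 \<Otimes>\<^sub>M ?G {0..<N})"
    using measurable_col_proj by (intro measurable_Pair measurable_restrict_subset) (auto simp: grid_def)
  have swap_m: "(\<lambda>(a, g). (g, a)) \<in> measurable (?G ?I0 \<Otimes>\<^sub>M ?G {0..<N}) (?G {0..<N} \<Otimes>\<^sub>M ?G ?I0)"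
    by measurable
  have "distr (gauss_grid n N) (PiM {0..<N} (\<lambda>_. borel) \<Otimes>\<^sub>M borel) (\<lambda>x. (col_proj n N x, col0_sq_norm n x))
      = distr (gauss_grid n N) (PiM {0..<N} (\<lambda>_. borel) \<Otimes>\<^sub>M borel)
          ((\<lambda>(g, a). (g, col0_sq_norm n a)) \<circ> (\<lambda>(a, g). (g, a)) \<circ> (\<lambda>x. (restrict x ?I0, col_proj n N x)))"
    by (rule distr_cong) (auto simp: col0_sq_norm_def)
  also have "\<dots> = distr (distr (gauss_grid n N) (?G ?I0 \<Otimes>\<^sub>M ?G {0..<N}) (\<lambda>x. (restrict x ?I0, col_proj n N x)))
      (PiM {0..<N} (\<lambda>_. borel) \<Otimes>\<^sub>M borel) ((\<lambda>(g, a). (g, col0_sq_norm n a)) \<circ> (\<lambda>(a, g). (g, a)))"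
    by (rule distr_distr[symmetric, OF measurable_comp[OF swap_m Hm] Gm])
  also have "\<dots> = distr (distr (?G ?I0 \<Otimes>\<^sub>M ?G {0..<N}) (?G {0..<N} \<Otimes>\<^sub>M ?G ?I0) (\<lambda>(a, g). (g, a)))
      (PiM {0..<N} (\<lambda>_. borel) \<Otimes>\<^sub>M borel) (\<lambda>(g, a). (g, col0_sq_norm n a))"
    unfolding distr_gauss_grid_col0_col_proj[OF n] by (rule distr_distr[symmetric, OF Hm swap_m])
  also have "\<dots> = distr (?G {0..<N} \<Otimes>\<^sub>M ?G ?I0) (PiM {0..<N} (\<lambda>_. borel) \<Otimes>\<^sub>M borel) (\<lambda>(g, a). (g, col0_sq_norm n a))"
    by (simp only: distr_pair_swap[symmetric])
  also have "\<dots> = distr (?G {0..<N}) (PiM {0..<N} (\<lambda>_. borel)) (\<lambda>g. g) \<Otimes>\<^sub>M distr (?G ?I0) borel (col0_sq_norm n)"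
  proof (rule pair_measure_distr[symmetric, OF _ sq_m])
    show "(\<lambda>g. g) \<in> measurable (?G {0..<N}) (PiM {0..<N} (\<lambda>_. borel))"
      by (rule measurable_ident_sets, rule sets_PiM_cong) simp_all
    show "sigma_finite_measure (distr (?G ?I0) borel (col0_sq_norm n))"
      using prob_space_chi_square[of n] unfolding chi_square_eq_distr_col0 by (rule prob_space_imp_sigma_finite)
  qed
  also have "distr (?G {0..<N}) (PiM {0..<N} (\<lambda>_. borel)) (\<lambda>g. g) = std_gauss_vec {0..<N}"
    unfolding std_gauss_vec_def by (rule distr_id2, rule sets_PiM_cong) simp_all
  also have "distr (?G ?I0) borel (col0_sq_norm n) = chi_square n"
    by (rule chi_square_eq_distr_col0[symmetric])
  finally show ?thesis .
qed

lemma sum_rank_one_update_mult: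
  fixes u :: "'i \<Rightarrow> real"
  assumes fin: "finite I" and i: "i \<in> I" and j: "j \<in> I" and unit: "(\<Sum>k\<in>I. (u k)\<^sup>2) = 1"
  shows "(\<Sum>k\<in>I. ((if i = k then 1 else 0) + a * u i * u k) * ((if j = k then 1 else 0) + a * u j * u k))
    = (if i = j then 1 else 0) + (2 * a + a\<^sup>2) * u i * u j"
proof -
  have "(\<Sum>k\<in>I. ((if i = k then 1 else 0) + a * u i * u k) * ((if j = k then 1 else 0) + a * u j * u k))
      = (\<Sum>k\<in>I. (if i = k \<and> j = k then 1 else 0) + a * u j * (if i = k then u k else 0)
          + a * u i * (if j = k then u k else 0) + a\<^sup>2 * u i * u j * (u k)\<^sup>2)"
    by (intro sum.cong refl) (auto simp: algebra_simps power2_eq_square)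
  also have "\<dots> = (\<Sum>k\<in>I. (if i = k \<and> j = k then 1 else 0)) + a * u j * (\<Sum>k\<in>I. (if i = k then u k else 0))
      + a * u i * (\<Sum>k\<in>I. (if j = k then u k else 0)) + a\<^sup>2 * u i * u j * (\<Sum>k\<in>I. (u k)\<^sup>2)"
    by (simp only: sum.distrib sum_distrib_left)
  also have "(\<Sum>k\<in>I. (if i = k \<and> j = k then 1 else 0)) = (if i = j then 1 else (0::real))"
    using fin i by (cases "i = j") (auto intro!: sum.neutral)
  also have "(\<Sum>k\<in>I. (if i = k then u k else 0)) = u i" using fin i by simp
  also have "(\<Sum>k\<in>I. (if j = k then u k else 0)) = u j" using fin j by simp
  finally show ?thesis
    using unit by (simp add: algebra_simps power2_eq_square)
qed

locale sparse_regression =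
  fixes n N :: nat and P \<sigma> :: real and \<beta> :: "nat \<Rightarrow> real"
  assumes n_pos: "n > 0" and sigma_pos: "\<sigma> > 0" and P_nonneg: "P \<ge> 0"
    and sum_sq_beta: "(\<Sum>j<N. (\<beta> j)\<^sup>2) = real n * P"
    and P_pos: "N > 0 \<Longrightarrow> P > 0"
begin

text \<open>In terms of the Gaussian array \<open>X\<close> of \<open>design_of_grid\<close>,
  \<open>y = sqrt (P + \<sigma>\<^sup>2) X v\<close> with the unit vector \<open>v = (rot_cos, rot_sin * rot_axis)\<close>,
  and the plane rotation moves the first unit vector to \<open>v\<close>. For \<open>P = 0\<close> division by zero
  makes \<open>rot_axis\<close> vanish, but then \<open>N = 0\<close> and the rotation is the identity.\<close>
definition rot_cos :: real where
  "rot_cos = \<sigma> / sqrt (P + \<sigma>\<^sup>2)"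

definition rot_sin :: real where
  "rot_sin = sqrt P / sqrt (P + \<sigma>\<^sup>2)"

definition rot_axis :: "nat \<Rightarrow> real" where
  "rot_axis l = \<beta> (l - 1) / sqrt (real n * P)"

definition cov_root :: "nat \<Rightarrow> nat \<Rightarrow> real" where
  "cov_root j k = (if j = k then 1 else 0) + (rot_cos - 1) * rot_axis (Suc j) * rot_axis (Suc k)"

definition noise_vec :: "(nat \<Rightarrow> real) \<Rightarrow> nat \<Rightarrow> real" where
  "noise_vec g = (\<lambda>j\<in>{0..<N}. \<Sum>k\<in>{0..<N}. cov_root j k * g k)"

definition noise_law :: "(nat \<Rightarrow> real) measure" where
  "noise_law = distr (std_gauss_vec {0..<N}) (PiM {0..<N} (\<lambda>_. borel)) noise_vec"

definition statistic :: "(nat \<times> nat \<Rightarrow> real) \<times> (nat \<Rightarrow> real) \<Rightarrow> (nat \<Rightarrow> real) \<times> real" where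
  "statistic = (\<lambda>(A, w). (\<lambda>j\<in>{0..<N}. Z1 n N \<beta> A w j, (vnorm n (obs n N \<beta> A w))\<^sup>2 / (P + \<sigma>\<^sup>2)))"

definition add_signal :: "(nat \<Rightarrow> real) \<times> real \<Rightarrow> (nat \<Rightarrow> real) \<times> real" where
  "add_signal = (\<lambda>(N1, X). (\<lambda>j\<in>{0..<N}. \<beta> j / sqrt (P + \<sigma>\<^sup>2) * (sqrt X / sqrt (real n)) + N1 j, X))"

abbreviation rotate :: "(nat \<times> nat \<Rightarrow> real) \<Rightarrow> nat \<times> nat \<Rightarrow> real" where
  "rotate \<equiv> plane_rotation n N rot_axis rot_cos rot_sin"

lemma P_sigma_pos: "P + \<sigma>\<^sup>2 > 0"
  using P_nonneg sigma_pos by (simp add: add_nonneg_pos)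

lemma rot_cos_sq_add_rot_sin_sq: "rot_cos\<^sup>2 + rot_sin\<^sup>2 = 1"
proof -
  have "rot_cos\<^sup>2 + rot_sin\<^sup>2 = (\<sigma>\<^sup>2 + P) / (P + \<sigma>\<^sup>2)"
    using P_nonneg P_sigma_pos by (simp add: rot_cos_def rot_sin_def power_divide add_divide_distrib)
  then show ?thesis using P_sigma_pos by (simp add: add.commute)
qed

lemma rot_cos_gt: "rot_cos > -1"
proof -
  have "rot_cos > 0" using sigma_pos P_sigma_pos by (simp add: rot_cos_def)
  then show ?thesis by linarith
qed

lemma sum_sq_rot_axis: "sqrt P * (\<Sum>l<N. (rot_axis (Suc l))\<^sup>2) = sqrt P"
proof (cases "N = 0")
  case False
  then have "P > 0" by (simp add: P_pos)
  then have "(\<Sum>l<N. (rot_axis (Suc l))\<^sup>2) = (\<Sum>l<N. (\<beta> l)\<^sup>2) / (real n * P)"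
    using n_pos by (simp add: rot_axis_def power_divide sum_divide_distrib)
  also have "\<dots> = 1" using sum_sq_beta n_pos \<open>P > 0\<close> by simp
  finally show ?thesis by simp
qed (use sum_sq_beta n_pos in simp)

lemma rot_axis_unit: "(\<Sum>l\<in>{1..N}. (rot_axis l)\<^sup>2) = 1 \<or> rot_sin = 0"
  using sum_sq_rot_axis by (auto simp: rot_sin_def sum.atLeast1_atMost_eq)

lemma beta_eq_rot_axis: "j < N \<Longrightarrow> \<beta> j / sqrt (real n) = sqrt P * rot_axis (Suc j)"
  using P_pos n_pos by (simp add: rot_axis_def real_sqrt_mult)

lemma is_mvn_noise_law:
  "is_mvn {0..<N} (\<lambda>i j. (if i = j then 1 else 0) - \<beta> i * \<beta> j / (real n * (P + \<sigma>\<^sup>2))) noise_law"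
  unfolding is_mvn_def
proof (intro exI[of _ cov_root] conjI ballI)
  show "noise_law = distr (std_gauss_vec {0..<N}) (PiM {0..<N} (\<lambda>_. borel))
      (\<lambda>g. \<lambda>i\<in>{0..<N}. \<Sum>k\<in>{0..<N}. cov_root i k * g k)"
    by (simp add: noise_law_def noise_vec_def[abs_def])
  fix i j assume i: "i \<in> {0..<N}" and j: "j \<in> {0..<N}"
  have P: "P > 0" using i by (simp add: P_pos)
  have "(\<Sum>k\<in>{0..<N}. (rot_axis (Suc k))\<^sup>2) = 1"
    using sum_sq_rot_axis P by (simp add: atLeast0LessThan)
  from sum_rank_one_update_mult[OF _ i j this, of "rot_cos - 1"]
  have "(\<Sum>k\<in>{0..<N}. cov_root i k * cov_root j k)
      = (if i = j then 1 else 0) + (rot_cos\<^sup>2 - 1) * (rot_axis (Suc i) * rot_axis (Suc j))"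
    by (simp add: cov_root_def power2_eq_square algebra_simps)
  also have "rot_cos\<^sup>2 - 1 = - (P / (P + \<sigma>\<^sup>2))"
    using rot_cos_sq_add_rot_sin_sq P_nonneg by (simp add: rot_sin_def power_divide eq_diff_eq')
  also have "rot_axis (Suc i) * rot_axis (Suc j) = \<beta> i * \<beta> j / (sqrt (real n * P))\<^sup>2"
    by (simp add: rot_axis_def power2_eq_square)
  also have "(sqrt (real n * P))\<^sup>2 = real n * P"
    using P by simp
  also have "- (P / (P + \<sigma>\<^sup>2)) * (\<beta> i * \<beta> j / (real n * P)) = - (\<beta> i * \<beta> j / (real n * (P + \<sigma>\<^sup>2)))"
    using P n_pos P_sigma_pos by (simp add: divide_simps)
  finally show "(if i = j then 1 else 0) - \<beta> i * \<beta> j / (real n * (P + \<sigma>\<^sup>2)) = (\<Sum>k\<in>{0..<N}. cov_root i k * cov_root j k)"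
    by simp
qed

end

lemma sets_chi_square [measurable_cong]: "sets (chi_square n) = sets borel"
  by (simp add: chi_square_def)

context sparse_regression
begin

lemma noise_vec_apply:
  assumes j: "j < N"
  shows "noise_vec g j = g j + (rot_cos - 1) * rot_axis (Suc j) * (\<Sum>k<N. rot_axis (Suc k) * g k)"
proof -
  have "noise_vec g j = (\<Sum>k\<in>{0..<N}. cov_root j k * g k)" using j by (simp add: noise_vec_def)
  also have "\<dots> = (\<Sum>k\<in>{0..<N}. (if j = k then g k else 0) + (rot_cos - 1) * rot_axis (Suc j) * (rot_axis (Suc k) * g k))"
    by (intro sum.cong refl) (simp add: cov_root_def algebra_simps)
  also have "\<dots> = g j + (rot_cos - 1) * rot_axis (Suc j) * (\<Sum>k<N. rot_axis (Suc k) * g k)"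
    using j by (simp add: sum.distrib sum_distrib_left atLeast0LessThan)
  finally show ?thesis .
qed

lemma design_of_grid_rotate:
  assumes i: "i < n"
  shows "j < N \<Longrightarrow> fst (design_of_grid n N \<sigma> (rotate x)) (i, j) = (1 / sqrt (real n))
           * (x (i, Suc j) + rot_axis (Suc j) * (rot_sin * x (i, 0) + (rot_cos - 1) * row_inner rot_axis N x i))"
    and "snd (design_of_grid n N \<sigma> (rotate x)) i = \<sigma> * (rot_cos * x (i, 0) - rot_sin * row_inner rot_axis N x i)"
  using i by (simp_all add: design_of_grid_def plane_rotation_def grid_def)

lemma row_inner_shift: "row_inner w N x i = (\<Sum>l<N. w (Suc l) * x (i, Suc l))"
  unfolding row_inner_def using sum.atLeast1_atMost_eq[of _ N] by simp

lemma obs_rotate: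
  assumes i: "i < n"
  shows "obs n N \<beta> (fst (design_of_grid n N \<sigma> (rotate x))) (snd (design_of_grid n N \<sigma> (rotate x))) i
    = sqrt (P + \<sigma>\<^sup>2) * x (i, 0)"
proof -
  let ?q = "row_inner rot_axis N x i"
  define D where "D = rot_sin * x (i, 0) + (rot_cos - 1) * ?q"
  have S: "sqrt (P + \<sigma>\<^sup>2) > 0" using P_sigma_pos by simp
  have "(\<Sum>j<N. fst (design_of_grid n N \<sigma> (rotate x)) (i, j) * \<beta> j)
      = (\<Sum>j<N. sqrt P * (rot_axis (Suc j) * (x (i, Suc j) + rot_axis (Suc j) * D)))"
  proof (intro sum.cong refl)
    fix j assume "j \<in> {..<N}"
    then have "\<beta> j = sqrt (real n) * (sqrt P * rot_axis (Suc j))"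
      using beta_eq_rot_axis[of j] n_pos by (simp add: divide_eq_eq mult.commute)
    then show "fst (design_of_grid n N \<sigma> (rotate x)) (i, j) * \<beta> j
        = sqrt P * (rot_axis (Suc j) * (x (i, Suc j) + rot_axis (Suc j) * D))"
      using \<open>j \<in> {..<N}\<close> n_pos by (simp add: design_of_grid_rotate[OF i] D_def field_simps)
  qed
  also have "\<dots> = sqrt P * ?q + D * (sqrt P * (\<Sum>l<N. (rot_axis (Suc l))\<^sup>2))"
    by (simp add: sum_distrib_left sum.distrib row_inner_shift algebra_simps power2_eq_square)
  also have "\<dots> = sqrt P * ?q + D * sqrt P"
    by (simp only: sum_sq_rot_axis)
  finally have "obs n N \<beta> (fst (design_of_grid n N \<sigma> (rotate x))) (snd (design_of_grid n N \<sigma> (rotate x))) i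
      = ?q * (sqrt P * rot_cos - \<sigma> * rot_sin) + x (i, 0) * (sqrt P * rot_sin + \<sigma> * rot_cos)"
    by (simp add: obs_def design_of_grid_rotate[OF i] D_def algebra_simps)
  also have "sqrt P * rot_cos - \<sigma> * rot_sin = 0"
    by (simp add: rot_cos_def rot_sin_def)
  also have "sqrt P * rot_sin + \<sigma> * rot_cos = (P + \<sigma>\<^sup>2) / sqrt (P + \<sigma>\<^sup>2)"
    using P_nonneg by (simp add: rot_cos_def rot_sin_def power2_eq_square add_divide_distrib)
  also have "\<dots> = sqrt (P + \<sigma>\<^sup>2)"
    using P_sigma_pos by (simp add: real_div_sqrt)
  finally show ?thesis by simp
qed

lemma vnorm_rotate:
  "vnorm n (obs n N \<beta> (fst (design_of_grid n N \<sigma> (rotate x))) (snd (design_of_grid n N \<sigma> (rotate x))))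
    = sqrt (P + \<sigma>\<^sup>2) * sqrt (col0_sq_norm n x)"
proof -
  have "vnorm n (obs n N \<beta> (fst (design_of_grid n N \<sigma> (rotate x))) (snd (design_of_grid n N \<sigma> (rotate x))))
      = sqrt ((P + \<sigma>\<^sup>2) * col0_sq_norm n x)"
    unfolding vnorm_def col0_sq_norm_def using P_sigma_pos
    by (simp add: obs_rotate power_mult_distrib sum_distrib_left)
  then show ?thesis by (simp add: real_sqrt_mult)
qed

lemma Z1_rotate:
  assumes j: "j < N"
  shows "Z1 n N \<beta> (fst (design_of_grid n N \<sigma> (rotate x))) (snd (design_of_grid n N \<sigma> (rotate x))) j
    = \<beta> j / sqrt (P + \<sigma>\<^sup>2) * (sqrt (col0_sq_norm n x) / sqrt (real n)) + noise_vec (col_proj n N x) j"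
proof -
  let ?A = "fst (design_of_grid n N \<sigma> (rotate x))"
  let ?q = "row_inner rot_axis N x"
  define r where "r = sqrt (col0_sq_norm n x)"
  define u where "u i = x (i, 0) / r" for i
  define D where "D i = rot_sin * x (i, 0) + (rot_cos - 1) * ?q i" for i
  have S: "sqrt (P + \<sigma>\<^sup>2) > 0" using P_sigma_pos by simp
  have "(\<Sum>i<n. ?A (i, j) * obs n N \<beta> ?A (snd (design_of_grid n N \<sigma> (rotate x))) i)
      = sqrt (P + \<sigma>\<^sup>2) * (\<Sum>i<n. ?A (i, j) * x (i, 0))"
    unfolding sum_distrib_left by (intro sum.cong refl) (simp add: obs_rotate)
  then have "Z1 n N \<beta> ?A (snd (design_of_grid n N \<sigma> (rotate x))) j
      = sqrt (real n) * (sqrt (P + \<sigma>\<^sup>2) * (\<Sum>i<n. ?A (i, j) * x (i, 0))) / (sqrt (P + \<sigma>\<^sup>2) * r)"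
    unfolding Z1_def vnorm_rotate r_def by simp
  also have "\<dots> = sqrt (real n) * (\<Sum>i<n. ?A (i, j) * x (i, 0)) / r"
    using S by (simp add: mult.left_commute)
  also have "\<dots> = (\<Sum>i<n. u i * (x (i, Suc j) + rot_axis (Suc j) * D i))"
    using n_pos j by (simp add: design_of_grid_rotate D_def u_def sum_divide_distrib sum_distrib_left
        add_divide_distrib diff_divide_distrib algebra_simps)
  also have "\<dots> = (\<Sum>i<n. u i * x (i, Suc j)) + rot_axis (Suc j) * (rot_sin * (\<Sum>i<n. u i * x (i, 0))
      + (rot_cos - 1) * (\<Sum>i<n. u i * ?q i))"
  proof -
    have "u i * (x (i, Suc j) + rot_axis (Suc j) * D i)
        = u i * x (i, Suc j) + rot_axis (Suc j) * (rot_sin * (u i * x (i, 0)) + (rot_cos - 1) * (u i * ?q i))" for i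
      by (simp add: D_def algebra_simps)
    then show ?thesis by (simp add: sum.distrib sum_distrib_left[symmetric])
  qed
  also have "(\<Sum>i<n. u i * x (i, Suc j)) = col_proj n N x j"
    using j by (simp add: col_proj_def u_def r_def)
  also have "(\<Sum>i<n. u i * x (i, 0)) = col0_sq_norm n x / r"
    by (simp add: u_def col0_sq_norm_def sum_divide_distrib power2_eq_square)
  also have "\<dots> = r"
    by (simp add: r_def real_div_sqrt col0_sq_norm_def sum_nonneg)
  also have "(\<Sum>i<n. u i * ?q i) = (\<Sum>k<N. rot_axis (Suc k) * col_proj n N x k)"
    by (simp add: u_def r_def row_inner_shift col_proj_def sum_distrib_left sum.swap[of _ "{..<n}"] algebra_simps)
  finally have Z: "Z1 n N \<beta> ?A (snd (design_of_grid n N \<sigma> (rotate x))) j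
      = col_proj n N x j + rot_axis (Suc j) * (rot_sin * r + (rot_cos - 1) * (\<Sum>k<N. rot_axis (Suc k) * col_proj n N x k))" .
  have "\<beta> j / sqrt (P + \<sigma>\<^sup>2) * (r / sqrt (real n)) = (\<beta> j / sqrt (real n)) * r / sqrt (P + \<sigma>\<^sup>2)"
    by simp
  also have "\<dots> = rot_axis (Suc j) * rot_sin * r"
    unfolding beta_eq_rot_axis[OF j] by (simp add: rot_sin_def)
  finally have signal: "\<beta> j / sqrt (P + \<sigma>\<^sup>2) * (r / sqrt (real n)) = rot_axis (Suc j) * rot_sin * r" .
  show ?thesis
    unfolding r_def[symmetric] signal noise_vec_apply[OF j] Z by (simp add: algebra_simps)
qed

lemma statistic_rotate:
  "statistic (design_of_grid n N \<sigma> (rotate x)) = add_signal (noise_vec (col_proj n N x), col0_sq_norm n x)"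
proof -
  have "(vnorm n (obs n N \<beta> (fst (design_of_grid n N \<sigma> (rotate x))) (snd (design_of_grid n N \<sigma> (rotate x)))))\<^sup>2
      / (P + \<sigma>\<^sup>2) = col0_sq_norm n x"
    unfolding vnorm_rotate using P_sigma_pos
    by (simp add: power_mult_distrib col0_sq_norm_def sum_nonneg)
  then show ?thesis
    unfolding statistic_def add_signal_def split_beta
    by (auto simp: Z1_rotate intro!: restrict_ext)
qed

lemma distr_statistic:
  "distr (design_noise_space n N \<sigma>) (PiM {0..<N} (\<lambda>_. borel) \<Otimes>\<^sub>M borel) statistic
    = distr (noise_law \<Otimes>\<^sub>M chi_square n) (PiM {0..<N} (\<lambda>_. borel) \<Otimes>\<^sub>M borel) add_signal"
proof -
  let ?D = "PiM {0..<N} (\<lambda>_. borel) \<Otimes>\<^sub>M (borel :: real measure)"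
  let ?proj = "\<lambda>x. (col_proj n N x, col0_sq_norm n x)"
  let ?noise = "\<lambda>(g, X). (noise_vec g, X :: real)"
  have stat_m: "statistic \<in> measurable (design_noise_space n N \<sigma>) ?D"
    unfolding statistic_def Z1_def obs_def vnorm_def design_noise_space_def by measurable
  have signal_m: "add_signal \<in> measurable ?D ?D"
    unfolding add_signal_def by measurable
  have noise_m: "?noise \<in> measurable ?D ?D"
    unfolding noise_vec_def by measurable
  have proj_m: "?proj \<in> measurable (gauss_grid n N) ?D"
  proof (rule measurable_Pair)
    have "sets (PiM {0..<N} (\<lambda>_. gauss 0 1)) = sets (PiM {0..<N} (\<lambda>_. borel :: real measure))"
      by (rule sets_PiM_cong) simp_all
    then show "col_proj n N \<in> measurable (gauss_grid n N) (PiM {0..<N} (\<lambda>_. borel))"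
      using measurable_col_proj measurable_cong_sets by blast
    show "col0_sq_norm n \<in> borel_measurable (gauss_grid n N)"
      by (rule measurable_col0_sq_norm) (auto simp: grid_def)
  qed
  have sets_law: "sets (std_gauss_vec {0..<N} \<Otimes>\<^sub>M chi_square n) = sets ?D"
    by (intro sets_pair_measure_cong sets_std_gauss_vec sets_chi_square)
  have rot_m: "rotate \<in> measurable (gauss_grid n N) (gauss_grid n N)"
    by (rule measurable_plane_rotation_gauss_grid[OF rot_cos_sq_add_rot_sin_sq rot_cos_gt rot_axis_unit])
  have "distr (design_noise_space n N \<sigma>) ?D statistic = distr (gauss_grid n N) ?D (statistic \<circ> design_of_grid n N \<sigma>)"
    by (subst distr_design_of_grid[OF n_pos sigma_pos, symmetric])
      (rule distr_distr[OF stat_m measurable_design_of_grid])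
  also have "\<dots> = distr (gauss_grid n N) ?D (statistic \<circ> design_of_grid n N \<sigma> \<circ> rotate)"
    by (subst distr_plane_rotation_gauss_grid[OF rot_cos_sq_add_rot_sin_sq rot_cos_gt rot_axis_unit, symmetric])
      (rule distr_distr[OF measurable_comp[OF measurable_design_of_grid stat_m] rot_m])
  also have "\<dots> = distr (gauss_grid n N) ?D ((add_signal \<circ> ?noise) \<circ> ?proj)"
    by (rule distr_cong) (simp_all add: statistic_rotate)
  also have "\<dots> = distr (std_gauss_vec {0..<N} \<Otimes>\<^sub>M chi_square n) ?D (add_signal \<circ> ?noise)"
    by (simp only: distr_distr[OF measurable_comp[OF noise_m signal_m] proj_m, symmetric]
        distr_gauss_grid_col_proj_col0_sq_norm[OF n_pos])
  also have "\<dots> = distr (distr (std_gauss_vec {0..<N} \<Otimes>\<^sub>M chi_square n) ?D ?noise) ?D add_signal"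
    by (rule distr_distr[symmetric, OF signal_m]) (simp add: noise_m measurable_cong_sets[OF sets_law refl])
  also have "distr (std_gauss_vec {0..<N} \<Otimes>\<^sub>M chi_square n) ?D ?noise = noise_law \<Otimes>\<^sub>M chi_square n"
  proof -
    have "distr (std_gauss_vec {0..<N} \<Otimes>\<^sub>M chi_square n) ?D ?noise
        = distr (std_gauss_vec {0..<N}) (PiM {0..<N} (\<lambda>_. borel)) noise_vec \<Otimes>\<^sub>M distr (chi_square n) borel (\<lambda>X. X)"
      by (rule pair_measure_distr[symmetric]) (auto simp: noise_vec_def prob_space_chi_square distr_id2 sets_chi_square
          intro!: prob_space_imp_sigma_finite cong: measurable_cong_sets)
    then show ?thesis by (simp add: noise_law_def distr_id2 sets_chi_square)
  qed
  finally show ?thesis .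
qed

end

context sparse_regression
begin

lemma sparse_regression_law:
  "\<exists>\<mu>. is_mvn {0..<N} (\<lambda>i j. (if i = j then 1 else 0) - \<beta> i * \<beta> j / (real n * (P + \<sigma>\<^sup>2))) \<mu> \<and>
     distr (design_noise_space n N \<sigma>) (PiM {0..<N} (\<lambda>_. borel) \<Otimes>\<^sub>M borel)
       (\<lambda>(A, w). (\<lambda>j\<in>{0..<N}. Z1 n N \<beta> A w j, (vnorm n (obs n N \<beta> A w))\<^sup>2 / (P + \<sigma>\<^sup>2)))
     = distr (\<mu> \<Otimes>\<^sub>M chi_square n) (PiM {0..<N} (\<lambda>_. borel) \<Otimes>\<^sub>M borel)
       (\<lambda>(N1, X). (\<lambda>j\<in>{0..<N}. \<beta> j / sqrt (P + \<sigma>\<^sup>2) * (sqrt X / sqrt (real n)) + N1 j, X))"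
  using is_mvn_noise_law distr_statistic unfolding statistic_def add_signal_def by blast

end

lemma sum_sq_one_spike_per_section:
  fixes \<beta> Q :: "nat \<Rightarrow> real"
  assumes spike: "\<And>l. l < L \<Longrightarrow> \<exists>!j. j \<in> {l * M..<(l + 1) * M} \<and> \<beta> j \<noteq> 0"
    and spike_sq: "\<And>l j. l < L \<Longrightarrow> j \<in> {l * M..<(l + 1) * M} \<Longrightarrow> \<beta> j \<noteq> 0 \<Longrightarrow> (\<beta> j)\<^sup>2 = Q l"
  shows "(\<Sum>j<M * L. (\<beta> j)\<^sup>2) = (\<Sum>l<L. Q l)"
proof -
  have section_sum: "(\<Sum>j\<in>{l * M..<l * M + M}. (\<beta> j)\<^sup>2) = Q l" if l: "l < L" for l
  proof -
    obtain j0 where j0: "j0 \<in> {l * M..<(l + 1) * M}" "\<beta> j0 \<noteq> 0"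
      and uniq: "\<And>j. j \<in> {l * M..<(l + 1) * M} \<Longrightarrow> \<beta> j \<noteq> 0 \<Longrightarrow> j = j0"
      using spike[OF l] by blast
    have "(\<Sum>j\<in>{l * M..<l * M + M}. (\<beta> j)\<^sup>2) = (\<Sum>j\<in>{l * M..<l * M + M}. if j = j0 then (\<beta> j0)\<^sup>2 else 0)"
      by (intro sum.cong refl) (use uniq in \<open>auto simp: add.commute\<close>)
    also have "\<dots> = (\<beta> j0)\<^sup>2" using j0(1) by (simp add: add.commute)
    finally show ?thesis using spike_sq[OF l j0] by simp
  qed
  have "(\<Sum>j<M * L. (\<beta> j)\<^sup>2) = (\<Sum>l<L. \<Sum>j\<in>{l * M..<l * M + M}. (\<beta> j)\<^sup>2)"
    using sum.nat_group[of "\<lambda>j. (\<beta> j)\<^sup>2" M L] by (simp add: mult.commute)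
  also have "\<dots> = (\<Sum>l<L. Q l)" by (simp add: section_sum)
  finally show ?thesis .
qed

theorem mainTheorem3:
  fixes n M L :: nat and Pl :: "nat \<Rightarrow> real" and P \<sigma> :: real and \<beta> :: "nat \<Rightarrow> real"
  assumes n_pos: "n > 0"
    and Pl_pos: "\<And>l. l < L \<Longrightarrow> Pl l > 0"
    and P_def: "P = (\<Sum>l<L. Pl l)"
    and sigma_pos: "\<sigma> > 0"
    and beta_sec: "\<And>l. l < L \<Longrightarrow>
          \<exists>!j. j \<in> {l * M..<(l + 1) * M} \<and> \<beta> j \<noteq> 0"
    and beta_val: "\<And>l j. l < L \<Longrightarrow> j \<in> {l * M..<(l + 1) * M} \<Longrightarrow> \<beta> j \<noteq> 0 \<Longrightarrow>
          \<beta> j = sqrt (real n * Pl l)"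
  shows "\<exists>\<mu>. is_mvn {0..<M * L}
             (\<lambda>i j. (if i = j then 1 else 0) - \<beta> i * \<beta> j / (real n * (P + \<sigma>\<^sup>2))) \<mu> \<and>
           distr (design_noise_space n (M * L) \<sigma>)
                 (PiM {0..<M * L} (\<lambda>_. borel) \<Otimes>\<^sub>M borel)
                 (\<lambda>(A, w). (\<lambda>j\<in>{0..<M * L}. Z1 n (M * L) \<beta> A w j,
                            (vnorm n (obs n (M * L) \<beta> A w))\<^sup>2 / (P + \<sigma>\<^sup>2)))
         = distr (\<mu> \<Otimes>\<^sub>M chi_square n)
                 (PiM {0..<M * L} (\<lambda>_. borel) \<Otimes>\<^sub>M borel)
                 (\<lambda>(N1, X). (\<lambda>j\<in>{0..<M * L}.
                      \<beta> j / sqrt (P + \<sigma>\<^sup>2) * (sqrt X / sqrt (real n)) + N1 j, X))"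
proof -
  have "(\<Sum>j<M * L. (\<beta> j)\<^sup>2) = (\<Sum>l<L. real n * Pl l)"
  proof (rule sum_sq_one_spike_per_section[OF beta_sec])
    fix l j assume l: "l < L" and "j \<in> {l * M..<(l + 1) * M}" "\<beta> j \<noteq> 0"
    then have "\<beta> j = sqrt (real n * Pl l)" by (rule beta_val)
    then show "(\<beta> j)\<^sup>2 = real n * Pl l"
      using Pl_pos[OF l] by simp
  qed
  then have "(\<Sum>j<M * L. (\<beta> j)\<^sup>2) = real n * P"
    by (simp add: P_def sum_distrib_left)
  moreover have "P \<ge> 0"
    unfolding P_def using Pl_pos by (intro sum_nonneg) (simp add: less_imp_le)
  moreover have "P > 0" if "M * L > 0"
    unfolding P_def using that Pl_pos by (intro sum_pos) auto
  ultimately interpret sparse_regression n "M * L" P \<sigma> \<beta>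
    using n_pos sigma_pos by unfold_locales auto
  show ?thesis by (rule sparse_regression_law)
qed

end
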